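(* The space of orientation-reversing isometries $\phi$ of $X$ with $\phi^2=\mathrm{Id}$ has exactly two connected components: one is the space of inversions $\{i_x\mid x\in X\}$, and the other is the space of involutions whose fixed point set is a totally geodesic hyperbolic plane of type II.
   Context: $X=\mathrm{SL}_3(\mathbb R)/\mathrm{SO}(3)$ is the Riemannian symmetric space. For $M\in\mathrm{SL}_3(\mathbb R)$ let $M^*=(M^{-1})^{T}$; every orientation-reversing isometry of $X$ has the form $[M]\mapsto[AM^*]$ for some $A\in\mathrm{SL}_3(\mathbb R)$. The inversion $i_x$ at $x\in X$ is the isometry fixing $x$ with differential $-\mathrm{Id}$ on $T_xX$; for $x=[A]$, $i_x([M])=[AA^TM^*]$. A totally geodesic hyperbolic plane of type II is an image under an isometry of $X$ of the plane $\mathrm{SO}(2,1)/\mathrm{SO}(2)\subset X$ (the orbit of $[\mathrm{Id}]$ under $\mathrm{SO}(2,1)\subset \mathrm{SL}_3(\mathbb R)$). *)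

theory Defs
  imports "HOL-Analysis.Analysis"
begin

type_synonym mat3 = "real^3^3"

definition SL3 :: "mat3 set" where
  "SL3 = {M. det M = 1}"

definition SO3 :: "mat3 set" where
  "SO3 = {K. det K = 1 \<and> transpose K ** K = mat 1}"

definition J21 :: mat3 where
  "J21 = (\<chi> i j. if i = j then (if i = 3 then -1 else 1) else 0)"

definition SO21 :: "mat3 set" where
  "SO21 = {M. det M = 1 \<and> transpose M ** J21 ** M = J21}"

definition mstar :: "mat3 \<Rightarrow> mat3" where
  "mstar M = transpose (matrix_inv M)"

text \<open>The point [M] of X = SL3/SO3 is the coset M SO(3).\<close>
definition cls :: "mat3 \<Rightarrow> mat3 set" where
  "cls M = (\<lambda>K. M ** K) ` SO3"

definition Xsp :: "mat3 set set" where
  "Xsp = cls ` SL3"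

definition rep :: "mat3 set \<Rightarrow> mat3" where
  "rep x = (SOME M. M \<in> x)"

definition topX :: "mat3 set topology" where
  "topX = topology (\<lambda>U. U \<subseteq> Xsp \<and> openin (top_of_set SL3) {M \<in> SL3. cls M \<in> U})"

definition lmap :: "mat3 \<Rightarrow> mat3 set \<Rightarrow> mat3 set" where
  "lmap A = restrict (\<lambda>x. cls (A ** rep x)) Xsp"

definition orev :: "mat3 \<Rightarrow> mat3 set \<Rightarrow> mat3 set" where
  "orev A = restrict (\<lambda>x. cls (A ** mstar (rep x))) Xsp"

definition isomX :: "(mat3 set \<Rightarrow> mat3 set) set" where
  "isomX = {lmap A | A. A \<in> SL3} \<union> {orev A | A. A \<in> SL3}"

definition orevX :: "(mat3 set \<Rightarrow> mat3 set) set" where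
  "orevX = {orev A | A. A \<in> SL3}"

definition inversion :: "mat3 set \<Rightarrow> mat3 set \<Rightarrow> mat3 set" where
  "inversion x = (let A = rep x in restrict (\<lambda>y. cls (A ** transpose A ** mstar (rep y))) Xsp)"

definition H2std :: "mat3 set set" where
  "H2std = cls ` SO21"

definition type2_plane :: "mat3 set set \<Rightarrow> bool" where
  "type2_plane P \<longleftrightarrow> (\<exists>g \<in> isomX. P = g ` H2std)"

definition fixset :: "(mat3 set \<Rightarrow> mat3 set) \<Rightarrow> mat3 set set" where
  "fixset \<phi> = {x \<in> Xsp. \<phi> x = x}"

definition InvolRev :: "(mat3 set \<Rightarrow> mat3 set) set" where
  "InvolRev = {\<phi> \<in> orevX. \<forall>x \<in> Xsp. \<phi> (\<phi> x) = x}"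

text \<open>Topology on maps X -> X: pointwise convergence (coincides with compact-open on isometries).\<close>
definition mapsX_top :: "(mat3 set \<Rightarrow> mat3 set) topology" where
  "mapsX_top = product_topology (\<lambda>_. topX) Xsp"

end

theory Submission
  imports Defs
begin

text \<open>
  An orientation-reversing isometry \<open>[M] \<mapsto> [A M*]\<close> is an involution exactly when \<open>A\<close> is
  symmetric, so these involutions are parametrised by the symmetric matrices of determinant one.
  If \<open>A\<close> is positive definite, then \<open>A = B B\<^sup>T\<close> and the map is the inversion at \<open>[B]\<close>, whose
  only fixed point is \<open>[B]\<close>. Otherwise \<open>A\<close> has signature \<open>(1,2)\<close>, so \<open>A = B (-J) B\<^sup>T\<close> and the
  fixed point set is the \<open>B\<close>-translate of the plane \<open>SO(2,1).[Id]\<close>. The first class is a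
  continuous image of the convex cone of positive definite matrices, the second one of that cone
  times the sphere (via \<open>A \<sim> M (2 u u\<^sup>T - 1) M\<close>), so both are connected. They are separated by the
  sign of \<open>min (tr A) (\<sigma>\<^sub>2 A)\<close>, which depends continuously on the involution for the topology of
  pointwise convergence: the Gram matrices of the images of \<open>[U*]\<close> and \<open>[U]\<close> are \<open>A U U\<^sup>T A\<close> and
  \<open>A (U U\<^sup>T)\<^sup>-\<^sup>1 A\<close>, and polarisation over finitely many \<open>U\<close> recovers \<open>\<sigma>\<^sub>2 A\<close> from the former and
  \<open>\<sigma>\<^sub>2 (A\<^sup>-\<^sup>1) = tr A\<close> from the inverse of the latter.
\<close>

lemma
  fixes M :: "real^'n^'n"
  assumes "det M \<noteq> 0"
  shows matrix_inv_right: "M ** matrix_inv M = mat 1"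
    and matrix_inv_left: "matrix_inv M ** M = mat 1"
proof -
  have "\<exists>N. M ** N = mat 1 \<and> N ** M = mat 1"
    using assms invertible_det_nz unfolding invertible_def by blast
  then have "M ** matrix_inv M = mat 1 \<and> matrix_inv M ** M = mat 1"
    unfolding matrix_inv_def by (rule someI_ex)
  then show "M ** matrix_inv M = mat 1" "matrix_inv M ** M = mat 1" by auto
qed

lemma matrix_inv_unique:
  fixes M N :: "real^'n^'n"
  assumes "M ** N = mat 1"
  shows "matrix_inv M = N"
proof -
  have "det M \<noteq> 0" using assms det_mul[of M N] by auto
  have "matrix_inv M = matrix_inv M ** (M ** N)" using assms by simp
  also have "\<dots> = N" by (simp add: matrix_mul_assoc matrix_inv_left[OF \<open>det M \<noteq> 0\<close>])
  finally show ?thesis .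
qed

lemma det_matrix_inv:
  fixes M :: "real^'n^'n"
  assumes "det M \<noteq> 0"
  shows "det (matrix_inv M) = 1 / det M"
  using det_mul[of M "matrix_inv M"] matrix_inv_right[OF assms] assms by (simp add: field_simps)

lemma matrix_inv_mult:
  fixes M N :: "real^'n^'n"
  assumes "det M \<noteq> 0" "det N \<noteq> 0"
  shows "matrix_inv (M ** N) = matrix_inv N ** matrix_inv M"
  by (rule matrix_inv_unique) (metis assms matrix_inv_right matrix_mul_assoc matrix_mul_rid)

lemma matrix_inv_transpose:
  fixes M :: "real^'n^'n"
  assumes "det M \<noteq> 0"
  shows "matrix_inv (transpose M) = transpose (matrix_inv M)"
  by (rule matrix_inv_unique) (metis assms matrix_inv_left matrix_transpose_mul transpose_mat)

lemma matrix_inv_matrix_inv: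
  fixes M :: "real^'n^'n"
  assumes "det M \<noteq> 0"
  shows "matrix_inv (matrix_inv M) = M"
  by (rule matrix_inv_unique) (rule matrix_inv_left[OF assms])

lemma matrix_mul_uminus:
  fixes A :: "'a::ring_1^'n^'m"
  shows "(- A) ** B = - (A ** B)" "A ** (- C) = - (A ** C)"
  by (simp_all add: matrix_matrix_mult_def vec_eq_iff sum_negf)

lemma det_mstar: "det M \<noteq> 0 \<Longrightarrow> det (mstar M) = 1 / det M"
  by (simp add: mstar_def det_matrix_inv)

lemma mstar_mult: "det M \<noteq> 0 \<Longrightarrow> det N \<noteq> 0 \<Longrightarrow> mstar (M ** N) = mstar M ** mstar N"
  by (simp add: mstar_def matrix_inv_mult matrix_transpose_mul)

lemma mstar_mstar:
  assumes "det M \<noteq> 0"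
  shows "mstar (mstar M) = M"
proof -
  have "det (matrix_inv M) \<noteq> 0" using assms by (simp add: det_matrix_inv)
  then show ?thesis
    using assms by (simp add: mstar_def matrix_inv_transpose matrix_inv_matrix_inv)
qed

lemma transpose_mult_mstar: "det M \<noteq> 0 \<Longrightarrow> transpose M ** mstar M = mat 1"
  by (metis matrix_inv_left matrix_transpose_mul mstar_def transpose_mat)

lemma mstar_mult_transpose: "det M \<noteq> 0 \<Longrightarrow> mstar M ** transpose M = mat 1"
  by (metis matrix_inv_right matrix_transpose_mul mstar_def transpose_mat)

lemma mstar_symmetric: "det A \<noteq> 0 \<Longrightarrow> transpose A = A \<Longrightarrow> mstar A = matrix_inv A"
  unfolding mstar_def by (metis matrix_inv_transpose)

lemma mstar_gram:
  assumes "det M \<noteq> 0"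
  shows "mstar M ** transpose (mstar M) = matrix_inv (M ** transpose M)"
proof -
  have "det (transpose M) \<noteq> 0" using assms by simp
  then show ?thesis using assms by (simp add: mstar_def matrix_inv_mult matrix_inv_transpose)
qed

lemma SL3_mult: "A \<in> SL3 \<Longrightarrow> B \<in> SL3 \<Longrightarrow> A ** B \<in> SL3"
  by (simp add: SL3_def det_mul)

lemma SL3_mstar: "A \<in> SL3 \<Longrightarrow> mstar A \<in> SL3"
  by (simp add: SL3_def det_mstar)

lemma SL3_matrix_inv: "A \<in> SL3 \<Longrightarrow> matrix_inv A \<in> SL3"
  by (simp add: SL3_def det_matrix_inv)

lemma mat_1_SL3: "mat 1 \<in> SL3"
  by (simp add: SL3_def)

lemma SO3_eq_rotation: "SO3 = {K. rotation_matrix K}"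
  by (auto simp: SO3_def rotation_matrix_def orthogonal_matrix)

lemma SO3_SL3: "K \<in> SO3 \<Longrightarrow> K \<in> SL3"
  by (simp add: SO3_def SL3_def)

lemma mstar_SO3:
  assumes "K \<in> SO3"
  shows "mstar K = K"
proof -
  have "K ** transpose K = mat 1"
    using assms by (simp add: SO3_eq_rotation rotation_matrix_def orthogonal_matrix_def)
  then show ?thesis by (simp add: mstar_def matrix_inv_unique)
qed

lemma cls_mult_SO3:
  assumes "K \<in> SO3"
  shows "cls (M ** K) = cls M"
proof -
  have K: "orthogonal_matrix K" "det K = 1"
    using assms by (auto simp: SO3_eq_rotation rotation_matrix_def)
  have "(\<lambda>L. K ** L) ` SO3 = SO3"
  proof (intro equalityI subsetI)
    show "L \<in> SO3" if "L \<in> (\<lambda>L. K ** L) ` SO3" for L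
      using that K by (auto simp: SO3_eq_rotation rotation_matrix_def orthogonal_matrix_mul det_mul)
  next
    fix L assume "L \<in> SO3"
    then have "transpose K ** L \<in> SO3"
      using K by (simp add: SO3_eq_rotation rotation_matrix_def orthogonal_matrix_mul det_mul)
    moreover have "L = K ** (transpose K ** L)"
      using K by (simp add: matrix_mul_assoc orthogonal_matrix_def)
    ultimately show "L \<in> (\<lambda>L. K ** L) ` SO3" by blast
  qed
  moreover have "cls (M ** K) = (\<lambda>L. M ** L) ` ((\<lambda>L. K ** L) ` SO3)"
    unfolding cls_def image_image by (simp add: matrix_mul_assoc)
  ultimately show ?thesis unfolding cls_def by simp
qed

lemma cls_self: "M \<in> cls M"
  unfolding cls_def SO3_def by (rule image_eqI[of _ _ "mat 1"]) auto

lemma in_clsD: "N \<in> cls M \<Longrightarrow> \<exists>K\<in>SO3. N = M ** K"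
  unfolding cls_def by auto

lemma rep_cls: "\<exists>K\<in>SO3. rep (cls M) = M ** K"
  by (rule in_clsD) (unfold rep_def, rule someI, rule cls_self)

lemma rep_SL3:
  assumes "x \<in> Xsp"
  shows "rep x \<in> SL3"
proof -
  obtain M where "M \<in> SL3" "x = cls M" using assms unfolding Xsp_def by blast
  moreover obtain K where "K \<in> SO3" "rep (cls M) = M ** K" using rep_cls by blast
  ultimately show ?thesis using SL3_mult SO3_SL3 by simp
qed

lemma cls_Xsp: "M \<in> SL3 \<Longrightarrow> cls M \<in> Xsp"
  unfolding Xsp_def by (rule imageI)

lemma gram_rep_cls: "rep (cls M) ** transpose (rep (cls M)) = M ** transpose M"
proof -
  obtain K where K: "K \<in> SO3" "rep (cls M) = M ** K" using rep_cls by blast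
  then have "K ** transpose K = mat 1"
    by (simp add: SO3_eq_rotation rotation_matrix_def orthogonal_matrix_def)
  moreover have "rep (cls M) ** transpose (rep (cls M)) = M ** (K ** transpose K) ** transpose M"
    unfolding K(2) by (simp add: matrix_transpose_mul matrix_mul_assoc)
  ultimately show ?thesis by simp
qed

lemma cls_eq_iff_gram:
  assumes "det M = det N" "det M \<noteq> 0"
  shows "cls M = cls N \<longleftrightarrow> M ** transpose M = N ** transpose N"
proof
  assume "cls M = cls N"
  then have "rep (cls M) ** transpose (rep (cls M)) = rep (cls N) ** transpose (rep (cls N))"
    by simp
  then show "M ** transpose M = N ** transpose N" by (simp only: gram_rep_cls)
next
  assume gram: "M ** transpose M = N ** transpose N"
  define K where "K = matrix_inv M ** N"
  have N: "N = M ** K"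
    unfolding K_def by (simp add: matrix_mul_assoc matrix_inv_right[OF assms(2)])
  have "K ** transpose K = matrix_inv M ** (M ** transpose M) ** transpose (matrix_inv M)"
    unfolding K_def gram by (simp add: matrix_transpose_mul matrix_mul_assoc)
  also have "\<dots> = (matrix_inv M ** M) ** transpose (matrix_inv M ** M)"
    by (simp add: matrix_transpose_mul matrix_mul_assoc)
  finally have "K ** transpose K = mat 1" by (simp add: matrix_inv_left[OF assms(2)])
  moreover have "det K = 1"
    unfolding K_def using assms by (simp add: det_mul det_matrix_inv)
  ultimately have "K \<in> SO3"
    unfolding SO3_def using matrix_left_right_inverse by blast
  then show "cls M = cls N" using N cls_mult_SO3 by simp
qed

lemma cls_mult_left_cancel:
  assumes "A \<in> SL3" "M \<in> SL3" "N \<in> SL3" "cls (A ** M) = cls (A ** N)"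
  shows "cls M = cls N"
proof -
  have dets: "det A = 1" "det M = 1" "det N = 1" using assms(1-3) by (auto simp: SL3_def)
  have "A ** (M ** transpose M) ** transpose A = A ** (N ** transpose N) ** transpose A"
    using assms(4) cls_eq_iff_gram[of "A ** M" "A ** N"] dets
    by (simp add: det_mul matrix_transpose_mul matrix_mul_assoc)
  moreover have "matrix_inv A ** (A ** G ** transpose A) ** mstar A = G" for G
  proof -
    have "matrix_inv A ** (A ** G ** transpose A) ** mstar A
        = (matrix_inv A ** A) ** G ** (transpose A ** mstar A)"
      by (simp add: matrix_mul_assoc)
    then show ?thesis using matrix_inv_left[of A] transpose_mult_mstar[of A] dets(1) by simp
  qed
  ultimately have "M ** transpose M = N ** transpose N" by metis
  then show ?thesis using cls_eq_iff_gram dets by simp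
qed

lemma orev_cls:
  assumes "M \<in> SL3"
  shows "orev A (cls M) = cls (A ** mstar M)"
proof -
  obtain K where K: "K \<in> SO3" "rep (cls M) = M ** K" using rep_cls by blast
  have "mstar (M ** K) = mstar M ** K"
    using assms K(1) by (simp add: mstar_mult mstar_SO3 SL3_def SO3_def)
  then have "orev A (cls M) = cls ((A ** mstar M) ** K)"
    unfolding orev_def using K(2) cls_Xsp[OF assms] by (simp add: matrix_mul_assoc)
  then show ?thesis using cls_mult_SO3[OF K(1)] by simp
qed

lemma lmap_cls:
  assumes "M \<in> SL3"
  shows "lmap A (cls M) = cls (A ** M)"
proof -
  obtain K where K: "K \<in> SO3" "rep (cls M) = M ** K" using rep_cls by blast
  then have "lmap A (cls M) = cls ((A ** M) ** K)"
    unfolding lmap_def using cls_Xsp[OF assms] by (simp add: matrix_mul_assoc)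
  then show ?thesis using cls_mult_SO3[OF K(1)] by simp
qed

lemma inversion_cls: "inversion (cls M) = orev (M ** transpose M)"
  unfolding inversion_def orev_def Let_def
  by (simp add: matrix_mul_assoc[symmetric] gram_rep_cls)

lemma orev_inj_on:
  assumes "A \<in> SL3"
  shows "inj_on (orev A) Xsp"
proof (rule inj_onI)
  fix x y assume "x \<in> Xsp" "y \<in> Xsp" and eq: "orev A x = orev A y"
  then obtain M N where M: "M \<in> SL3" "x = cls M" and N: "N \<in> SL3" "y = cls N"
    unfolding Xsp_def by auto
  have dets: "det M = 1" "det N = 1" using M N by (auto simp: SL3_def)
  have "cls (A ** mstar M) = cls (A ** mstar N)"
    using eq unfolding M(2) N(2) orev_cls[OF M(1)] orev_cls[OF N(1)] .
  then have "cls (mstar M) = cls (mstar N)"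
    using cls_mult_left_cancel assms SL3_mstar M(1) N(1) by blast
  then have "matrix_inv (M ** transpose M) = matrix_inv (N ** transpose N)"
    using cls_eq_iff_gram[of "mstar M" "mstar N"] dets by (simp add: det_mstar mstar_gram)
  then have "matrix_inv (matrix_inv (M ** transpose M)) = matrix_inv (matrix_inv (N ** transpose N))"
    by simp
  then have "M ** transpose M = N ** transpose N"
    using dets by (simp add: matrix_inv_matrix_inv det_mul)
  then show "x = y" using cls_eq_iff_gram[of M N] dets M(2) N(2) by simp
qed

lemma lmap_inj_on:
  assumes "A \<in> SL3"
  shows "inj_on (lmap A) Xsp"
proof (rule inj_onI)
  fix x y assume "x \<in> Xsp" "y \<in> Xsp" and eq: "lmap A x = lmap A y"
  then obtain M N where M: "M \<in> SL3" "x = cls M" and N: "N \<in> SL3" "y = cls N"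
    unfolding Xsp_def by auto
  have "cls (A ** M) = cls (A ** N)"
    using eq unfolding M(2) N(2) lmap_cls[OF M(1)] lmap_cls[OF N(1)] .
  then show "x = y" using cls_mult_left_cancel assms M N by blast
qed

lemma isomX_inj_on: "g \<in> isomX \<Longrightarrow> inj_on g Xsp"
  unfolding isomX_def using orev_inj_on lmap_inj_on by blast

section \<open>Symmetric 3x3 matrices\<close>

definition diag3 :: "real^3 \<Rightarrow> mat3" where
  "diag3 v = (\<chi> i j. if i = j then v$i else 0)"

definition quad_form :: "mat3 \<Rightarrow> real^3 \<Rightarrow> real" where
  "quad_form A x = x \<bullet> (A *v x)"

definition pos_def :: "mat3 \<Rightarrow> bool" where
  "pos_def A \<longleftrightarrow> (\<forall>x. x \<noteq> 0 \<longrightarrow> 0 < quad_form A x)"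

lemmas mat3_expand = vec_eq_iff forall_3 matrix_matrix_mult_def sum_3 transpose_def mat_def det_3
  inner_vec_def matrix_vector_mult_def diag3_def

lemma symmetric_mat3_entries:
  fixes A :: mat3
  assumes "transpose A = A"
  shows "A$2$1 = A$1$2" "A$3$1 = A$1$3" "A$3$2 = A$2$3"
  using arg_cong[OF assms, of "\<lambda>M. M$i$j" for i j] by (simp_all add: transpose_def)

lemma symmetric_inner_mult:
  fixes A :: mat3
  assumes "transpose A = A"
  shows "x \<bullet> (A *v y) = y \<bullet> (A *v x)"
  using symmetric_mat3_entries[OF assms] by (simp add: mat3_expand algebra_simps)

lemma quad_form_add_scaleR:
  assumes "transpose A = A"
  shows "quad_form A (u + t *\<^sub>R w) = quad_form A u + 2 * t * (w \<bullet> (A *v u)) + t\<^sup>2 * quad_form A w"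
  using symmetric_inner_mult[OF assms, of u w]
  by (simp add: quad_form_def algebra_simps power2_eq_square inner_commute)

lemma quad_form_scaleR: "quad_form A (c *\<^sub>R x) = c\<^sup>2 * quad_form A x"
  by (simp add: quad_form_def power2_eq_square matrix_vector_mult_scaleR)

lemma continuous_on_quad_form: "continuous_on S (quad_form A)"
  unfolding quad_form_def by (intro continuous_intros linear_continuous_on matrix_vector_mul_linear)

lemma linear_le_quadratic_imp_zero:
  fixes b K :: real
  assumes "\<And>t. 2 * t * b \<le> t\<^sup>2 * K"
  shows "b = 0"
proof -
  define c where "c = \<bar>K\<bar> + 1"
  have "c > 0" "2 * c - K > 0" unfolding c_def by auto
  have "2 * (b / c) * b \<le> (b / c)\<^sup>2 * K" by (rule assms)
  then have "2 * b\<^sup>2 * c \<le> b\<^sup>2 * K"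
    using \<open>c > 0\<close> by (simp add: field_simps power2_eq_square)
  then have "b\<^sup>2 * (2 * c - K) \<le> 0" by (simp add: algebra_simps)
  then have "b\<^sup>2 \<le> 0" using \<open>2 * c - K > 0\<close> by (simp add: mult_le_0_iff)
  then show "b = 0" by simp
qed

lemma quad_form_max_orthogonal:
  fixes A :: mat3
  assumes sym: "transpose A = A" and S: "subspace S" "u \<in> S" "w \<in> S"
    and u: "u \<bullet> u = 1" and wu: "w \<bullet> u = 0"
    and max: "\<forall>y\<in>S. y \<bullet> y = 1 \<longrightarrow> quad_form A y \<le> quad_form A u"
  shows "w \<bullet> (A *v u) = 0"
proof (rule linear_le_quadratic_imp_zero)
  fix t :: real
  define x where "x = u + t *\<^sub>R w"
  have "x \<in> S" unfolding x_def using S by (simp add: subspace_add subspace_scale)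
  have xx: "x \<bullet> x = 1 + t\<^sup>2 * (w \<bullet> w)"
    unfolding x_def using u wu by (simp add: algebra_simps inner_commute power2_eq_square)
  then have "x \<bullet> x > 0" by (simp add: add_pos_nonneg)
  define y where "y = (1 / sqrt (x \<bullet> x)) *\<^sub>R x"
  have "y \<in> S" "y \<bullet> y = 1"
    unfolding y_def using \<open>x \<in> S\<close> \<open>x \<bullet> x > 0\<close> S(1) by (simp_all add: subspace_scale)
  then have "quad_form A y \<le> quad_form A u" using max by blast
  moreover have "quad_form A y = quad_form A x / (x \<bullet> x)"
    unfolding y_def quad_form_scaleR using \<open>x \<bullet> x > 0\<close> by (simp add: power_divide)
  ultimately have "quad_form A x / (x \<bullet> x) \<le> quad_form A u" by simp
  then have "quad_form A x \<le> quad_form A u * (x \<bullet> x)"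
    using \<open>x \<bullet> x > 0\<close> by (simp add: divide_le_eq)
  then show "2 * t * (w \<bullet> (A *v u)) \<le> t\<^sup>2 * (quad_form A u * (w \<bullet> w) - quad_form A w)"
    unfolding x_def quad_form_add_scaleR[OF sym] xx[unfolded x_def] by (simp add: algebra_simps)
qed

lemma unit_orthogonal_exists:
  fixes u :: "real^3"
  assumes "norm u = 1"
  obtains v where "norm v = 1" "v \<bullet> u = 0"
proof -
  obtain Q where Q: "rotation_matrix Q" "Q *v axis 3 1 = u"
    using rotation_matrix_exists_basis[OF _ assms] by auto
  then have "orthogonal_transformation (\<lambda>x. Q *v x)"
    by (simp add: rotation_matrix_def orthogonal_transformation_matrix)
  then have ip: "(Q *v x) \<bullet> (Q *v y) = x \<bullet> y" for x y
    unfolding orthogonal_transformation_def by blast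
  have "norm (Q *v axis 1 1) = 1" by (simp add: norm_eq_sqrt_inner ip)
  moreover have "(Q *v axis 1 1) \<bullet> u = 0" unfolding Q(2)[symmetric] ip by (simp add: inner_axis_axis)
  ultimately show ?thesis by (rule that)
qed

lemma det_rows_cross3: "det (vector [b, cross3 a b, a] :: mat3) = cross3 a b \<bullet> cross3 a b"
  by (simp add: cross3_simps det_3 inner_vec_def sum_3 algebra_simps)

lemma mult_transpose_rows: "((M::mat3) ** transpose M)$i$j = M$i \<bullet> M$j"
  by (simp add: matrix_matrix_mult_def transpose_def inner_vec_def)

lemma congruence_entry: "((V::mat3) ** A ** transpose V)$i$j = V$i \<bullet> (A *v V$j)"
  by (simp add: matrix_matrix_mult_def transpose_def inner_vec_def matrix_vector_mult_def
      sum_distrib_left sum_distrib_right algebra_simps sum_3)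

lemma symmetric_mat3_eigenvectors:
  fixes A :: mat3
  assumes sym: "transpose A = A"
  obtains u1 u2 where "norm u1 = 1" "norm u2 = 1" "u1 \<bullet> u2 = 0"
    "\<And>y. norm y = 1 \<Longrightarrow> quad_form A y \<le> quad_form A u1"
    "\<And>w. w \<bullet> u1 = 0 \<Longrightarrow> w \<bullet> (A *v u1) = 0"
    "\<And>w. w \<bullet> u1 = 0 \<Longrightarrow> w \<bullet> u2 = 0 \<Longrightarrow> w \<bullet> (A *v u2) = 0"
proof -
  have "sphere (0::real^3) 1 \<noteq> {}" by simp
  then obtain u1 where "u1 \<in> sphere 0 1"
    and u1max: "\<forall>y\<in>sphere 0 1. quad_form A y \<le> quad_form A u1"
    using continuous_attains_sup[OF compact_sphere _ continuous_on_quad_form] by blast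
  then have u1: "norm u1 = 1" by simp
  define H where "H = {x::real^3. u1 \<bullet> x = 0}"
  have "subspace H" unfolding H_def by (rule subspace_hyperplane)
  obtain v where "norm v = 1" "v \<bullet> u1 = 0" using unit_orthogonal_exists[OF u1] by blast
  then have "sphere 0 1 \<inter> H \<noteq> {}" unfolding H_def by (auto simp: inner_commute)
  moreover have "compact (sphere 0 1 \<inter> H)"
    unfolding H_def by (intro compact_Int_closed compact_sphere closed_hyperplane)
  ultimately obtain u2 where "u2 \<in> sphere 0 1 \<inter> H"
    and u2max: "\<forall>y\<in>sphere 0 1 \<inter> H. quad_form A y \<le> quad_form A u2"
    using continuous_attains_sup[OF _ _ continuous_on_quad_form] by blast
  then have u2: "norm u2 = 1" "u1 \<bullet> u2 = 0" unfolding H_def by auto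
  have "w \<bullet> (A *v u1) = 0" if "w \<bullet> u1 = 0" for w
    using quad_form_max_orthogonal[OF sym subspace_UNIV _ _ _ that] u1 u1max
    by (simp add: norm_eq_1)
  moreover have "w \<bullet> (A *v u2) = 0" if "w \<bullet> u1 = 0" "w \<bullet> u2 = 0" for w
    using quad_form_max_orthogonal[OF sym \<open>subspace H\<close> _ _ _ that(2)] u2 u2max that(1)
    unfolding H_def by (simp add: norm_eq_1 inner_commute)
  ultimately show ?thesis using that u1 u2 u1max by simp
qed

theorem symmetric_mat3_spectral:
  fixes A :: mat3
  assumes sym: "transpose A = A"
  obtains R lam where "rotation_matrix R" "A = R ** diag3 lam ** transpose R"
    "lam$1 \<le> lam$3" "lam$2 \<le> lam$3"
proof -
  obtain u1 u2 where u: "norm u1 = 1" "norm u2 = 1" "u1 \<bullet> u2 = 0"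
    and u1max: "\<And>y. norm y = 1 \<Longrightarrow> quad_form A y \<le> quad_form A u1"
    and P1: "\<And>w. w \<bullet> u1 = 0 \<Longrightarrow> w \<bullet> (A *v u1) = 0"
    and P2: "\<And>w. w \<bullet> u1 = 0 \<Longrightarrow> w \<bullet> u2 = 0 \<Longrightarrow> w \<bullet> (A *v u2) = 0"
    using symmetric_mat3_eigenvectors[OF sym] by blast
  define u3 where "u3 = cross3 u1 u2"
  have "(norm u3)\<^sup>2 = 1" using norm_cross_dot[of u1 u2] u by (simp add: u3_def)
  then have n: "u1 \<bullet> u1 = 1" "u2 \<bullet> u2 = 1" "u3 \<bullet> u3 = 1"
    using u by (simp_all add: norm_eq_1 power2_norm_eq_inner)
  have o: "u3 \<bullet> u1 = 0" "u3 \<bullet> u2 = 0" "u2 \<bullet> u1 = 0"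
    using u(3) by (simp_all add: u3_def dot_cross_self inner_commute)
  \<comment> \<open>a positively oriented orthonormal frame with the maximiser \<open>u1\<close> in the last row\<close>
  define V :: mat3 where "V = vector [u2, u3, u1]"
  have V: "V$1 = u2" "V$2 = u3" "V$3 = u1" unfolding V_def by simp_all
  have "V ** transpose V = mat 1"
    unfolding vec_eq_iff mult_transpose_rows forall_3 V using n o by (simp add: mat_def inner_commute)
  moreover have "det V = 1" using n(3) unfolding V_def u3_def det_rows_cross3 .
  ultimately have rot: "rotation_matrix (transpose V)"
    by (simp add: rotation_matrix_def orthogonal_matrix_def matrix_left_right_inverse)
  define D where "D = V ** A ** transpose V"
  define lam where "lam = (\<chi> i. D$i$i)"
  have "D = diag3 lam"
  proof -
    have "u1 \<bullet> (A *v u2) = 0" "u1 \<bullet> (A *v u3) = 0" "u2 \<bullet> (A *v u3) = 0"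
      using P1 P2 o symmetric_inner_mult[OF sym] by (metis inner_commute)+
    moreover have "u2 \<bullet> (A *v u1) = 0" "u3 \<bullet> (A *v u1) = 0" "u3 \<bullet> (A *v u2) = 0"
      using P1 P2 o by auto
    ultimately show ?thesis
      unfolding D_def lam_def vec_eq_iff forall_3 congruence_entry by (simp add: diag3_def V)
  qed
  have "transpose V ** V = mat 1"
    using rot by (simp add: rotation_matrix_def orthogonal_matrix_def)
  moreover have "transpose V ** D ** V = (transpose V ** V) ** A ** (transpose V ** V)"
    by (simp add: D_def matrix_mul_assoc)
  ultimately have "A = transpose V ** diag3 lam ** transpose (transpose V)"
    using \<open>D = diag3 lam\<close> by simp
  moreover have "quad_form A u2 \<le> quad_form A u1" "quad_form A u3 \<le> quad_form A u1"
    using u1max n by (simp_all add: norm_eq_1)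
  then have "lam$1 \<le> lam$3" "lam$2 \<le> lam$3"
    unfolding lam_def D_def congruence_entry by (simp_all add: V quad_form_def)
  ultimately show ?thesis by (rule that[OF rot])
qed

lemma inner_matrix_vector_transpose: "x \<bullet> (R *v y) = (transpose R *v x) \<bullet> (y::real^'n)"
  by (simp add: dot_lmul_matrix)

lemma quad_form_congruence: "quad_form (R ** M ** transpose R) x = quad_form M (transpose R *v x)"
  unfolding quad_form_def
  by (simp add: inner_matrix_vector_transpose matrix_vector_mul_assoc[symmetric]
      del: transpose_matrix_vector)

lemma quad_form_diag3: "quad_form (diag3 lam) y = lam$1 * (y$1)\<^sup>2 + lam$2 * (y$2)\<^sup>2 + lam$3 * (y$3)\<^sup>2"
  by (simp add: quad_form_def mat3_expand power2_eq_square algebra_simps)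

lemma diag3_mult: "diag3 a ** diag3 b = diag3 (\<chi> i. a$i * b$i)"
  by (simp add: mat3_expand)

lemma transpose_diag3: "transpose (diag3 a) = diag3 a"
  by (simp add: mat3_expand)

lemma det_diag3: "det (diag3 lam) = lam$1 * lam$2 * lam$3"
  by (simp add: mat3_expand)

lemma pos_def_congruence_diag3:
  assumes "orthogonal_matrix R"
  shows "pos_def (R ** diag3 lam ** transpose R) \<longleftrightarrow> (\<forall>i. lam$i > 0)"
proof
  assume pd: "pos_def (R ** diag3 lam ** transpose R)"
  show "\<forall>i. lam$i > 0"
  proof
    fix i :: 3
    have Rax: "transpose R *v (R *v axis i 1) = axis i 1"
      using assms by (simp add: matrix_vector_mul_assoc orthogonal_matrix)
    then have "R *v axis i 1 \<noteq> 0" by (metis axis_eq_0_iff matrix_vector_mult_0_right one_neq_zero)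
    then have "0 < quad_form (diag3 lam) (transpose R *v (R *v axis i 1))"
      using pd unfolding pos_def_def quad_form_congruence by blast
    then have "0 < quad_form (diag3 lam) (axis i 1)" by (simp only: Rax)
    moreover have "\<forall>i. quad_form (diag3 lam) (axis i 1) = lam$i"
      unfolding forall_3 by (simp add: quad_form_diag3 axis_def)
    ultimately show "lam$i > 0" by simp
  qed
next
  assume pos: "\<forall>i. lam$i > 0"
  show "pos_def (R ** diag3 lam ** transpose R)"
    unfolding pos_def_def quad_form_congruence quad_form_diag3
  proof (intro allI impI)
    fix x :: "real^3" assume "x \<noteq> 0"
    define y where "y = transpose R *v x"
    have "R *v y = x"
      using assms
      by (simp add: y_def matrix_vector_mul_assoc orthogonal_matrix_def del: transpose_matrix_vector)
    then have "y \<noteq> 0" using \<open>x \<noteq> 0\<close> by auto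
    then have "y$1 \<noteq> 0 \<or> y$2 \<noteq> 0 \<or> y$3 \<noteq> 0" by (simp add: vec_eq_iff forall_3)
    moreover have "0 \<le> lam$k * (y$k)\<^sup>2" "y$k \<noteq> 0 \<Longrightarrow> 0 < lam$k * (y$k)\<^sup>2" for k
      using pos by (simp_all add: less_imp_le)
    ultimately show "0 < lam$1 * (y$1)\<^sup>2 + lam$2 * (y$2)\<^sup>2 + lam$3 * (y$3)\<^sup>2"
      by (smt (verit))
  qed
qed

lemma pos_def_det_pos:
  assumes "transpose A = A" "pos_def A"
  shows "det A > 0"
proof -
  obtain R lam where R: "rotation_matrix R" "A = R ** diag3 lam ** transpose R"
    using symmetric_mat3_spectral[OF assms(1)] by blast
  then have "\<forall>i. lam$i > 0"
    using assms(2) pos_def_congruence_diag3 by (simp add: rotation_matrix_def)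
  then show ?thesis
    using R by (simp add: det_mul det_diag3 rotation_matrix_def)
qed

lemma diag3_sqrt_abs_sgn:
  "diag3 lam = diag3 (\<chi> i. sqrt \<bar>lam$i\<bar>) ** diag3 (\<chi> i. sgn (lam$i)) ** diag3 (\<chi> i. sqrt \<bar>lam$i\<bar>)"
proof -
  have "sqrt \<bar>x\<bar> * sgn x * sqrt \<bar>x\<bar> = x" for x :: real
    by (metis real_sqrt_mult_self abs_mult_sgn abs_abs mult.commute mult.assoc)
  then show ?thesis by (simp add: diag3_mult)
qed

lemma congruence_diag3_sgn:
  assumes "rotation_matrix R" "A = R ** diag3 lam ** transpose R"
  defines "B \<equiv> R ** diag3 (\<chi> i. sqrt \<bar>lam$i\<bar>)"
  shows "A = B ** diag3 (\<chi> i. sgn (lam$i)) ** transpose B"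
    and "det B = sqrt \<bar>det A\<bar>"
proof -
  show "A = B ** diag3 (\<chi> i. sgn (lam$i)) ** transpose B"
    unfolding assms(2) B_def
    by (subst diag3_sqrt_abs_sgn) (simp add: matrix_transpose_mul transpose_diag3 matrix_mul_assoc)
  show "det B = sqrt \<bar>det A\<bar>"
    using assms(1) unfolding assms(2) B_def
    by (simp add: det_mul det_diag3 rotation_matrix_def abs_mult real_sqrt_mult)
qed

lemma indefinite_mat3_spectral:
  assumes "transpose A = A" "det A > 0" "\<not> pos_def A"
  obtains R lam where "rotation_matrix R" "A = R ** diag3 lam ** transpose R"
    "lam$1 < 0" "lam$2 < 0" "lam$3 > 0"
proof -
  obtain R lam where R: "rotation_matrix R" "A = R ** diag3 lam ** transpose R"
    and le: "lam$1 \<le> lam$3" "lam$2 \<le> lam$3"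
    using symmetric_mat3_spectral[OF assms(1)] by blast
  have "lam$1 * lam$2 * lam$3 > 0"
    using assms(2) R by (simp add: det_mul det_diag3 rotation_matrix_def)
  moreover have "\<not> (lam$1 > 0 \<and> lam$2 > 0 \<and> lam$3 > 0)"
    using assms(3) R pos_def_congruence_diag3[of R lam] by (auto simp: rotation_matrix_def forall_3)
  ultimately have "lam$1 < 0 \<and> lam$2 < 0 \<and> lam$3 > 0"
    using le by (smt (verit) mult_nonneg_nonpos mult_nonneg_nonpos2 zero_le_mult_iff)
  then show ?thesis using that R by blast
qed

definition half_turn :: "real^3 \<Rightarrow> mat3" where
  "half_turn u = (\<chi> i j. 2 * u$i * u$j) - mat 1"

lemma transpose_half_turn: "transpose (half_turn u) = half_turn u"
  by (simp add: half_turn_def mat3_expand)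

lemma det_half_turn: "det (half_turn u) = 2 * (u \<bullet> u) - 1"
  by (simp add: half_turn_def mat3_expand algebra_simps)

lemma quad_form_half_turn: "quad_form (half_turn u) v = 2 * (u \<bullet> v)\<^sup>2 - v \<bullet> v"
  by (simp add: half_turn_def quad_form_def mat3_expand algebra_simps power2_eq_square)

lemma half_turn_axis3: "half_turn (axis 3 1) = - J21"
  by (auto simp: half_turn_def J21_def vec_eq_iff forall_3 mat_def axis_def)

lemma half_turn_congruence:
  assumes "orthogonal_matrix R"
  shows "half_turn (R *v u) = R ** half_turn u ** transpose R"
proof -
  have "(\<chi> i j. 2 * (R *v u)$i * (R *v u)$j) = R ** (\<chi> i j. 2 * u$i * u$j) ** transpose R"
    by (simp add: mat3_expand algebra_simps)
  moreover have "R ** (X - mat 1) ** transpose R = R ** X ** transpose R - R ** transpose R"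
    for X :: mat3
    by (simp add: mat3_expand algebra_simps)
  ultimately show ?thesis
    using assms unfolding half_turn_def by (simp add: orthogonal_matrix_def)
qed

lemma continuous_on_half_turn: "continuous_on S f \<Longrightarrow> continuous_on S (\<lambda>z. half_turn (f z))"
  unfolding half_turn_def by (intro continuous_intros)

lemma indefinite_half_turn_form:
  assumes "transpose A = A" "det A > 0" "\<not> pos_def A"
  obtains M u where "transpose M = M" "pos_def M" "norm u = 1" "A = M ** half_turn u ** M"
proof -
  obtain R lam where R: "rotation_matrix R" "A = R ** diag3 lam ** transpose R"
    and signs: "lam$1 < 0" "lam$2 < 0" "lam$3 > 0"
    using indefinite_mat3_spectral[OF assms] by blast
  have RR: "transpose R ** R = mat 1" "R ** transpose R = mat 1"
    using R(1) by (auto simp: rotation_matrix_def orthogonal_matrix_def)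
  define s where "s = (\<chi> i. sqrt \<bar>lam$i\<bar>)"
  define M where "M = R ** diag3 s ** transpose R"
  define u where "u = R *v axis 3 1"
  have "transpose M = M"
    unfolding M_def by (simp add: matrix_transpose_mul transpose_diag3 matrix_mul_assoc)
  moreover have "pos_def M"
    unfolding M_def s_def using R(1) signs
    by (subst pos_def_congruence_diag3) (auto simp: rotation_matrix_def forall_3)
  moreover have "norm u = 1"
    unfolding u_def norm_eq_sqrt_inner inner_matrix_vector_transpose
    by (simp add: matrix_vector_mul_assoc RR del: transpose_matrix_vector)
  moreover have "A = M ** half_turn u ** M"
  proof -
    have "diag3 (\<chi> i. sgn (lam$i)) = - J21"
      using signs by (auto simp: diag3_def J21_def vec_eq_iff forall_3)
    then have "A = (R ** diag3 s) ** (- J21) ** transpose (R ** diag3 s)"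
      using congruence_diag3_sgn(1)[OF R] unfolding s_def by simp
    also have "\<dots> = M ** (R ** (- J21) ** transpose R) ** M"
      unfolding M_def
      by (simp add: matrix_transpose_mul transpose_diag3 matrix_mul_assoc)
         (simp add: matrix_mul_assoc[symmetric] RR)
    also have "R ** (- J21) ** transpose R = half_turn u"
      unfolding u_def half_turn_axis3[symmetric] using R(1)
      by (simp add: half_turn_congruence rotation_matrix_def)
    finally show ?thesis .
  qed
  ultimately show ?thesis by (rule that)
qed

definition SymSL3 :: "mat3 set" where
  "SymSL3 = {A \<in> SL3. transpose A = A}"

definition PosSL3 :: "mat3 set" where
  "PosSL3 = {A \<in> SymSL3. pos_def A}"

definition IndefSL3 :: "mat3 set" where
  "IndefSL3 = {A \<in> SymSL3. \<not> pos_def A}"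

lemma SymSL3_eq_Un: "SymSL3 = PosSL3 \<union> IndefSL3"
  unfolding PosSL3_def IndefSL3_def by auto

lemma gram_PosSL3:
  assumes "M \<in> SL3"
  shows "M ** transpose M \<in> PosSL3"
proof -
  have "det (transpose M) \<noteq> 0" using assms by (simp add: SL3_def)
  have "0 < quad_form (M ** transpose M) x" if "x \<noteq> 0" for x
  proof -
    have "transpose M *v x \<noteq> 0"
      using that \<open>det (transpose M) \<noteq> 0\<close>
      by (metis matrix_inv_left matrix_vector_mul_assoc matrix_vector_mul_lid matrix_vector_mult_0_right)
    then show ?thesis
      unfolding quad_form_def matrix_vector_mul_assoc[symmetric] inner_matrix_vector_transpose[of x M]
      by simp
  qed
  then show ?thesis
    using assms unfolding PosSL3_def SymSL3_def pos_def_def SL3_def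
    by (simp add: det_mul matrix_transpose_mul)
qed

lemma PosSL3_gram:
  assumes "A \<in> PosSL3"
  obtains B where "B \<in> SL3" "A = B ** transpose B"
proof -
  have A: "transpose A = A" "pos_def A" "det A = 1"
    using assms by (auto simp: PosSL3_def SymSL3_def SL3_def)
  obtain R lam where R: "rotation_matrix R" "A = R ** diag3 lam ** transpose R"
    using symmetric_mat3_spectral[OF A(1)] by blast
  then have "\<forall>i. lam$i > 0" using A(2) pos_def_congruence_diag3 by (simp add: rotation_matrix_def)
  then have "diag3 (\<chi> i. sgn (lam$i)) = mat 1" by (simp add: diag3_def mat_def vec_eq_iff)
  then show ?thesis
    using congruence_diag3_sgn[OF R] A(3) that by (simp add: SL3_def)
qed

lemma J21_simps: "J21 ** J21 = mat 1" "transpose J21 = J21" "transpose (- J21) = - J21"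
  by (simp_all add: J21_def mat3_expand)

lemma mJ_SL3: "- J21 \<in> SL3"
  by (simp add: J21_def SL3_def det_3)

lemma mJ_SO3: "- J21 \<in> SO3"
  by (simp add: J21_def SO3_def mat3_expand)

lemma IndefSL3_congruent_mJ:
  assumes "A \<in> IndefSL3"
  obtains B where "B \<in> SL3" "A = B ** (- J21) ** transpose B"
proof -
  have A: "transpose A = A" "\<not> pos_def A" "det A = 1"
    using assms by (auto simp: IndefSL3_def SymSL3_def SL3_def)
  obtain R lam where R: "rotation_matrix R" "A = R ** diag3 lam ** transpose R"
    and signs: "lam$1 < 0" "lam$2 < 0" "lam$3 > 0"
    using indefinite_mat3_spectral[OF A(1) _ A(2)] A(3) by auto
  then have "diag3 (\<chi> i. sgn (lam$i)) = - J21"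
    by (auto simp: diag3_def J21_def vec_eq_iff forall_3)
  then show ?thesis
    using congruence_diag3_sgn[OF R] A(3) that by (simp add: SL3_def)
qed

lemma mJ_IndefSL3: "- J21 \<in> IndefSL3"
proof -
  have "quad_form (- J21) (axis 1 1) = -1"
    by (simp add: quad_form_def J21_def mat3_expand axis_def)
  then have "\<not> pos_def (- J21)"
    unfolding pos_def_def by (metis axis_eq_0_iff not_less_iff_gr_or_eq zero_less_one neg_0_less_iff_less)
  then show ?thesis unfolding IndefSL3_def SymSL3_def using J21_simps mJ_SL3 by simp
qed

lemma SO3_symmetric_conj_mJ:
  assumes "K \<in> SO3" "transpose K = K" "\<not> pos_def K"
  obtains Q where "Q \<in> SO3" "K = Q ** (- J21) ** transpose Q"
proof -
  have K: "det K = 1" "K ** transpose K = mat 1"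
    using assms(1) by (auto simp: SO3_eq_rotation rotation_matrix_def orthogonal_matrix_def)
  obtain R lam where R: "rotation_matrix R" "K = R ** diag3 lam ** transpose R"
    and signs: "lam$1 < 0" "lam$2 < 0" "lam$3 > 0"
    using indefinite_mat3_spectral[OF assms(2) _ assms(3)] K(1) by auto
  have RR: "transpose R ** R = mat 1" using R(1) by (simp add: rotation_matrix_def orthogonal_matrix)
  have "transpose R ** (K ** transpose K) ** R = diag3 lam ** diag3 lam"
    unfolding R(2) by (simp add: matrix_transpose_mul transpose_diag3 matrix_mul_assoc RR)
      (simp add: matrix_mul_assoc[symmetric] RR)
  then have "diag3 (\<chi> i. lam$i * lam$i) = mat 1" using K(2) RR by (simp add: diag3_mult)
  then have "(diag3 (\<chi> i. lam$i * lam$i))$i$i = (mat 1 :: mat3)$i$i" for i by simp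
  then have "lam$i = 1 \<or> lam$i = -1" for i by (simp add: diag3_def mat_def square_eq_1_iff)
  then have "diag3 lam = - J21"
    using signs by (force simp: diag3_def J21_def vec_eq_iff forall_3)
  then show ?thesis using that R by (simp add: SO3_eq_rotation)
qed

lemma pos_def_add: "pos_def A \<Longrightarrow> pos_def B \<Longrightarrow> pos_def (A + B)"
  by (simp add: pos_def_def quad_form_def matrix_vector_mult_add_rdistrib inner_add_right add_pos_pos)

lemma pos_def_fixpoint:
  assumes A: "transpose A = A" "pos_def A" and P: "transpose P = P" "pos_def P"
    and eq: "A ** matrix_inv P ** A = P"
  shows "A = P"
proof -
  have dP: "det P \<noteq> 0" using pos_def_det_pos[OF P] by simp
  \<comment> \<open>\<open>Z\<close> squares to \<open>1\<close> while \<open>Z + 1 = P\<^sup>-\<^sup>1 (A + P)\<close> is invertible, so \<open>Z = 1\<close>\<close>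
  define Z where "Z = matrix_inv P ** A"
  have "Z ** Z = matrix_inv P ** (A ** matrix_inv P ** A)"
    unfolding Z_def by (simp add: matrix_mul_assoc)
  then have "Z ** Z = mat 1" using eq matrix_inv_left[OF dP] by simp
  then have "(Z - mat 1) ** (Z + mat 1) = 0"
    by (simp add: mat3_expand algebra_simps)
  moreover have "Z + mat 1 = matrix_inv P ** (A + P)"
    unfolding Z_def matrix_add_ldistrib matrix_inv_left[OF dP] ..
  moreover have "det (A + P) > 0"
    using A P by (intro pos_def_det_pos pos_def_add) (simp_all add: transpose_def vec_eq_iff)
  ultimately have zero: "(Z - mat 1) ** (Z + mat 1) = 0" and "det (Z + mat 1) \<noteq> 0"
    using dP by (simp_all add: det_mul det_matrix_inv)
  from \<open>det (Z + mat 1) \<noteq> 0\<close>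
  have "Z - mat 1 = ((Z - mat 1) ** (Z + mat 1)) ** matrix_inv (Z + mat 1)"
    by (simp add: matrix_mul_assoc[symmetric] matrix_inv_right)
  also have "\<dots> = 0" unfolding zero by (simp add: mat3_expand)
  finally have "P ** Z = P" by simp
  then show ?thesis
    unfolding Z_def by (simp add: matrix_mul_assoc matrix_inv_right[OF dP])
qed

section \<open>Orientation-reversing involutions\<close>

lemma orev_orev_cls:
  assumes "A \<in> SL3" "M \<in> SL3"
  shows "orev A (orev A (cls M)) = cls (A ** mstar A ** M)"
proof -
  have "det A \<noteq> 0" "det M \<noteq> 0" using assms by (auto simp: SL3_def)
  then have "mstar (A ** mstar M) = mstar A ** M"
    by (simp add: mstar_mult det_mstar mstar_mstar)
  then show ?thesis
    using assms by (simp add: orev_cls SL3_mult SL3_mstar matrix_mul_assoc)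
qed

lemma orev_orev:
  assumes "A \<in> SymSL3" "x \<in> Xsp"
  shows "orev A (orev A x) = x"
proof -
  have A: "A \<in> SL3" "transpose A = A" "det A \<noteq> 0" using assms(1) by (auto simp: SymSL3_def SL3_def)
  obtain M where "M \<in> SL3" "x = cls M" using assms(2) unfolding Xsp_def by blast
  then show ?thesis
    using orev_orev_cls[OF A(1)] matrix_inv_right[OF A(3)] mstar_symmetric[OF A(3,2)] by simp
qed

definition transvection :: "3 \<Rightarrow> 3 \<Rightarrow> real \<Rightarrow> mat3" where
  "transvection i j c = (\<chi> a b. if a = b then 1 else if a = i \<and> b = j then c else 0)"

lemma transvection_SL3: "i \<noteq> j \<Longrightarrow> transvection i j c \<in> SL3"
proof -
  have "\<forall>i j. i \<noteq> j \<longrightarrow> transvection i j c \<in> SL3"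
    unfolding forall_3 by (simp add: SL3_def transvection_def det_3)
  then show "i \<noteq> j \<Longrightarrow> transvection i j c \<in> SL3" by blast
qed

lemma trivial_action_eq_id:
  assumes "det C = 1" and triv: "\<And>M. M \<in> SL3 \<Longrightarrow> cls (C ** M) = cls M"
  shows "C = mat 1"
proof -
  have gram: "C ** (M ** transpose M) ** transpose C = M ** transpose M" if "M \<in> SL3" for M
    using triv[OF that] cls_eq_iff_gram[of "C ** M" M] that assms(1)
    by (simp add: SL3_def det_mul matrix_transpose_mul matrix_mul_assoc)
  have "C ** transpose C = mat 1" using gram[OF mat_1_SL3] by simp
  then have CC: "transpose C ** C = mat 1" using matrix_left_right_inverse by blast
  \<comment> \<open>commuting with \<open>P\<close> forces \<open>C\<close> to be diagonal; two transvections then pin down its diagonal\<close>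
  define P where "P = diag3 (vector [4, 1, 1/4])"
  have "diag3 (vector [2, 1, 1/2]) \<in> SL3" by (simp add: SL3_def det_diag3)
  moreover have "diag3 (vector [2, 1, 1/2]) ** transpose (diag3 (vector [2, 1, 1/2])) = P"
    unfolding P_def by (simp add: mat3_expand)
  ultimately have "C ** P ** transpose C = P" using gram by metis
  then have "C ** P = P ** C"
    using CC by (metis matrix_mul_assoc matrix_mul_rid)
  then have off: "C$1$2 = 0" "C$1$3 = 0" "C$2$1 = 0" "C$2$3 = 0" "C$3$1 = 0" "C$3$2 = 0"
    unfolding P_def by (simp_all add: mat3_expand)
  have "C$1$1 * C$2$2 = 1" "C$2$2 * C$3$3 = 1"
    using gram[OF transvection_SL3, of 1 2 1] gram[OF transvection_SL3, of 2 3 1] off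
    by (simp_all add: transvection_def mat3_expand)
  moreover have "C$1$1 * C$2$2 * C$3$3 = 1" using assms(1) off by (simp add: det_3)
  ultimately show ?thesis using off by (simp add: vec_eq_iff forall_3 mat_def)
qed

lemma symmetric_if_orev_involutive:
  assumes A: "A \<in> SL3" and invol: "\<forall>x\<in>Xsp. orev A (orev A x) = x"
  shows "transpose A = A"
proof -
  have dA: "det A \<noteq> 0" using A by (simp add: SL3_def)
  have "A ** mstar A = mat 1"
  proof (rule trivial_action_eq_id)
    show "det (A ** mstar A) = 1" using A dA by (simp add: SL3_def det_mul det_mstar)
    show "cls (A ** mstar A ** M) = cls M" if "M \<in> SL3" for M
      using invol cls_Xsp[OF that] orev_orev_cls[OF A that] by simp
  qed
  then have "matrix_inv A = matrix_inv (transpose A)"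
    using matrix_inv_unique dA by (simp add: mstar_def matrix_inv_transpose)
  then have "matrix_inv (matrix_inv A) = matrix_inv (matrix_inv (transpose A))" by simp
  then show ?thesis using dA by (simp add: matrix_inv_matrix_inv)
qed

lemma InvolRev_eq: "InvolRev = orev ` SymSL3"
proof
  show "InvolRev \<subseteq> orev ` SymSL3"
    unfolding InvolRev_def orevX_def SymSL3_def using symmetric_if_orev_involutive by blast
  show "orev ` SymSL3 \<subseteq> InvolRev"
    unfolding InvolRev_def orevX_def using orev_orev by (auto simp: SymSL3_def)
qed

lemma inversions_eq: "inversion ` Xsp = orev ` PosSL3"
proof
  show "inversion ` Xsp \<subseteq> orev ` PosSL3"
    unfolding Xsp_def using gram_PosSL3 by (auto simp: inversion_cls)
  show "orev ` PosSL3 \<subseteq> inversion ` Xsp"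
  proof
    fix \<phi> assume "\<phi> \<in> orev ` PosSL3"
    then obtain A where "A \<in> PosSL3" "\<phi> = orev A" by blast
    moreover obtain B where "B \<in> SL3" "A = B ** transpose B" using PosSL3_gram[OF \<open>A \<in> PosSL3\<close>] .
    ultimately show "\<phi> \<in> inversion ` Xsp" using cls_Xsp by (auto simp: inversion_cls[symmetric])
  qed
qed

section \<open>Fixed point sets\<close>

lemma fixset_orev_gram:
  assumes B: "B \<in> SL3"
  shows "fixset (orev (B ** transpose B)) = {cls B}"
proof (intro equalityI subsetI)
  fix x assume "x \<in> fixset (orev (B ** transpose B))"
  then obtain M where M: "M \<in> SL3" "x = cls M" and fixed: "orev (B ** transpose B) x = x"
    unfolding fixset_def Xsp_def by auto
  define A where "A = B ** transpose B"
  have A: "A \<in> PosSL3" "det A = 1"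
    unfolding A_def using gram_PosSL3[OF B] by (auto simp: PosSL3_def SymSL3_def SL3_def)
  have dM: "det M = 1" using M by (simp add: SL3_def)
  have "cls (A ** mstar M) = cls M" using fixed unfolding A_def M(2) orev_cls[OF M(1)] .
  then have "(A ** mstar M) ** transpose (A ** mstar M) = M ** transpose M"
    using cls_eq_iff_gram[of "A ** mstar M" M] A(2) dM by (simp add: det_mul det_mstar)
  then have "A ** matrix_inv (M ** transpose M) ** A = M ** transpose M"
    using A(1) dM
    by (simp add: PosSL3_def SymSL3_def matrix_transpose_mul matrix_mul_assoc mstar_gram[symmetric])
  then have "A = M ** transpose M"
    using pos_def_fixpoint gram_PosSL3[OF M(1)] A(1) by (auto simp: PosSL3_def SymSL3_def)
  then show "x \<in> {cls B}"
    using cls_eq_iff_gram[of M B] dM B M(2) unfolding A_def by (simp add: SL3_def)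
next
  fix x assume "x \<in> {cls B}"
  have "det B \<noteq> 0" using B by (simp add: SL3_def)
  then have "orev (B ** transpose B) (cls B) = cls B"
    using B by (simp add: orev_cls matrix_mul_assoc[symmetric] transpose_mult_mstar)
  then show "x \<in> fixset (orev (B ** transpose B))"
    using \<open>x \<in> {cls B}\<close> cls_Xsp[OF B] by (simp add: fixset_def)
qed

lemma SO21_SL3: "L \<in> SO21 \<Longrightarrow> L \<in> SL3"
  by (simp add: SO21_def SL3_def)

lemma H2std_subset_Xsp: "H2std \<subseteq> Xsp"
  unfolding H2std_def Xsp_def using SO21_SL3 by blast

lemma H2std_two_points: obtains a b where "a \<in> H2std" "b \<in> H2std" "a \<noteq> b"
proof -
  \<comment> \<open>the boost in the \<open>(e\<^sub>1, e\<^sub>3)\<close>-plane with \<open>cosh t = 5/4\<close>, \<open>sinh t = 3/4\<close>\<close>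
  define L :: mat3
    where "L = (\<chi> i j. if i = 2 \<or> j = 2 then mat 1 $ i $ j else if i = j then 5/4 else 3/4)"
  have "mat 1 \<in> SO21" "L \<in> SO21" by (simp_all add: SO21_def L_def J21_def mat3_expand)
  moreover have "cls (mat 1) \<noteq> cls L"
    using cls_eq_iff_gram[of "mat 1" L] \<open>L \<in> SO21\<close> by (simp add: SO21_def L_def mat3_expand)
  ultimately show ?thesis using that unfolding H2std_def by blast
qed

lemma type2_plane_not_singleton:
  assumes "type2_plane P"
  shows "P \<noteq> {x}"
proof
  assume "P = {x}"
  obtain g where g: "g \<in> isomX" "P = g ` H2std" using assms unfolding type2_plane_def by blast
  obtain a b where ab: "a \<in> H2std" "b \<in> H2std" "a \<noteq> b" by (rule H2std_two_points)
  then have "g a = g b" using g(2) \<open>P = {x}\<close> by blast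
  then show False
    using isomX_inj_on[OF g(1)] ab H2std_subset_Xsp unfolding inj_on_def by blast
qed

lemma SO21_iff_congruence:
  assumes "det L = 1"
  shows "L \<in> SO21 \<longleftrightarrow> L ** (- J21) ** transpose L = - J21"
proof -
  have "transpose L ** J21 ** L = J21 \<longleftrightarrow> L ** J21 ** transpose L = J21" if "det L = 1" for L
  proof
    assume "transpose L ** J21 ** L = J21"
    then have "transpose L ** (J21 ** L ** J21) = mat 1"
      by (simp add: matrix_mul_assoc J21_simps)
    then have "(J21 ** L ** J21) ** transpose L = mat 1"
      using matrix_left_right_inverse by blast
    then have "J21 ** (J21 ** L ** J21 ** transpose L) = J21" by simp
    then show "L ** J21 ** transpose L = J21"
      by (simp add: matrix_mul_assoc J21_simps)
  next
    assume "L ** J21 ** transpose L = J21"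
    then have "L ** (J21 ** transpose L ** J21) = mat 1"
      by (simp add: matrix_mul_assoc J21_simps)
    then have "(J21 ** transpose L ** J21) ** L = mat 1"
      using matrix_left_right_inverse by blast
    then have "J21 ** (J21 ** transpose L ** J21 ** L) = J21" by simp
    then show "transpose L ** J21 ** L = J21"
      by (simp add: matrix_mul_assoc J21_simps)
  qed
  then show ?thesis using assms by (simp add: SO21_def matrix_mul_uminus)
qed

lemma fixset_orev_mJ_subset:
  assumes "x \<in> fixset (orev (- J21))"
  shows "x \<in> H2std"
proof -
  obtain N where N: "N \<in> SL3" "x = cls N" and fixed: "orev (- J21) x = x"
    using assms unfolding fixset_def Xsp_def by auto
  have dN: "det N = 1" "det N \<noteq> 0" using N(1) by (auto simp: SL3_def)
  have "- J21 ** mstar N \<in> cls N"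
    using fixed cls_self unfolding N(2) orev_cls[OF N(1)] by metis
  then obtain K where K: "K \<in> SO3" "- J21 ** mstar N = N ** K" using in_clsD by blast
  \<comment> \<open>\<open>K\<close> is a symmetric rotation congruent to \<open>-J21\<close>, hence a half-turn \<open>Q (-J21) Q\<^sup>T\<close>,
    and \<open>N Q\<close> then preserves the form \<open>J21\<close>\<close>
  have NKN: "N ** K ** transpose N = - J21"
    using K(2) mstar_mult_transpose[OF dN(2)] by (metis matrix_mul_assoc matrix_mul_rid)
  have "K = matrix_inv N ** (- J21) ** mstar N"
    using K(2) matrix_inv_left[OF dN(2)] by (metis matrix_mul_assoc matrix_mul_lid)
  then have "transpose K = K"
    by (simp add: mstar_def matrix_transpose_mul J21_simps(3) matrix_mul_assoc)
  moreover have "\<not> pos_def K"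
  proof
    assume "pos_def K"
    moreover have "transpose N *v axis 1 1 \<noteq> 0"
      using dN(2) by (metis axis_eq_0_iff matrix_inv_left det_transpose matrix_vector_mul_assoc
          matrix_vector_mul_lid matrix_vector_mult_0_right one_neq_zero)
    ultimately have "0 < quad_form (N ** K ** transpose N) (axis 1 1)"
      unfolding pos_def_def quad_form_congruence by blast
    then show False
      unfolding NKN by (simp add: quad_form_def J21_def mat3_expand axis_def)
  qed
  ultimately obtain Q where Q: "Q \<in> SO3" "K = Q ** (- J21) ** transpose Q"
    using SO3_symmetric_conj_mJ[OF K(1)] by blast
  have "(N ** Q) ** (- J21) ** transpose (N ** Q) = - J21"
    using NKN Q(2) by (simp add: matrix_transpose_mul matrix_mul_assoc)
  then have "N ** Q \<in> SO21"
    using SO21_iff_congruence Q(1) dN(1) by (simp add: SO3_def det_mul)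
  moreover have "x = cls (N ** Q)" using N(2) cls_mult_SO3[OF Q(1)] by simp
  ultimately show "x \<in> H2std" unfolding H2std_def by blast
qed

lemma orev_mJ_cls_SO21:
  assumes "L \<in> SO21"
  shows "orev (- J21) (cls L) = cls L"
proof -
  have "L ** (- J21) ** transpose L = - J21" "det L \<noteq> 0"
    using assms SO21_iff_congruence by (auto simp: SO21_def)
  then have "- J21 ** mstar L = L ** (- J21)"
    by (metis matrix_mul_assoc matrix_mul_rid transpose_mult_mstar)
  then show ?thesis
    using assms cls_mult_SO3[OF mJ_SO3] by (simp add: orev_cls SO21_SL3)
qed

lemma fixset_orev_mJ: "fixset (orev (- J21)) = H2std"
proof (intro equalityI subsetI)
  show "x \<in> H2std" if "x \<in> fixset (orev (- J21))" for x
    using that by (rule fixset_orev_mJ_subset)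
  show "x \<in> fixset (orev (- J21))" if "x \<in> H2std" for x
    using that orev_mJ_cls_SO21 H2std_subset_Xsp unfolding fixset_def H2std_def by auto
qed

lemma orev_congruent_cls:
  assumes B: "B \<in> SL3" and C: "C \<in> SL3" and N: "N \<in> SL3"
  shows "orev (B ** C ** transpose B) (cls (B ** N)) = lmap B (orev C (cls N))"
proof -
  have "det B \<noteq> 0" "det N \<noteq> 0" using B N by (auto simp: SL3_def)
  then have "B ** C ** transpose B ** mstar (B ** N) = B ** (C ** mstar N)"
    by (simp add: mstar_mult matrix_mul_assoc)
       (simp add: matrix_mul_assoc[symmetric] transpose_mult_mstar)
  then show ?thesis
    using B C N by (simp add: orev_cls lmap_cls SL3_mult SL3_mstar)
qed

lemma fixset_orev_congruent:
  assumes B: "B \<in> SL3" and C: "C \<in> SL3"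
  shows "fixset (orev (B ** C ** transpose B)) = lmap B ` fixset (orev C)"
proof (intro equalityI subsetI)
  fix x assume "x \<in> fixset (orev (B ** C ** transpose B))"
  then obtain M where M: "M \<in> SL3" "x = cls M" and fixed: "orev (B ** C ** transpose B) x = x"
    unfolding fixset_def Xsp_def by auto
  define N where "N = matrix_inv B ** M"
  have N: "N \<in> SL3" "B ** N = M"
    using B M(1) SL3_mult[OF SL3_matrix_inv[OF B] M(1)]
    by (simp_all add: N_def matrix_mul_assoc matrix_inv_right SL3_def)
  have "lmap B (orev C (cls N)) = lmap B (cls N)"
    using fixed orev_congruent_cls[OF B C N(1)] lmap_cls[OF N(1)] N(2) unfolding M(2) by simp
  then have "orev C (cls N) = cls N"
    using lmap_inj_on[OF B] cls_Xsp[OF N(1)] cls_Xsp[OF SL3_mult[OF C SL3_mstar[OF N(1)]]]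
    unfolding inj_on_def orev_cls[OF N(1)] by blast
  then show "x \<in> lmap B ` fixset (orev C)"
    using cls_Xsp[OF N(1)] lmap_cls[OF N(1), of B] N(2) unfolding fixset_def M(2) by auto
next
  fix y assume "y \<in> lmap B ` fixset (orev C)"
  then obtain N where N: "N \<in> SL3" "y = lmap B (cls N)" "orev C (cls N) = cls N"
    unfolding fixset_def Xsp_def by auto
  then show "y \<in> fixset (orev (B ** C ** transpose B))"
    using orev_congruent_cls[OF B C N(1)] B
    by (simp add: fixset_def lmap_cls cls_Xsp SL3_mult)
qed

lemma type2_involutions_eq: "{\<phi> \<in> InvolRev. type2_plane (fixset \<phi>)} = orev ` IndefSL3"
proof (intro equalityI subsetI)
  fix \<phi> assume "\<phi> \<in> {\<phi> \<in> InvolRev. type2_plane (fixset \<phi>)}"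
  then obtain A where A: "A \<in> SymSL3" "\<phi> = orev A" and "type2_plane (fixset (orev A))"
    unfolding InvolRev_eq by blast
  moreover have "\<not> type2_plane (fixset (orev A))" if "A \<in> PosSL3"
    using PosSL3_gram[OF that] fixset_orev_gram type2_plane_not_singleton by metis
  ultimately show "\<phi> \<in> orev ` IndefSL3" using SymSL3_eq_Un by blast
next
  fix \<phi> assume "\<phi> \<in> orev ` IndefSL3"
  then obtain A where A: "A \<in> IndefSL3" "\<phi> = orev A" by blast
  then obtain B where B: "B \<in> SL3" "A = B ** (- J21) ** transpose B"
    using IndefSL3_congruent_mJ by blast
  have "fixset \<phi> = lmap B ` H2std"
    using fixset_orev_congruent[OF B(1) mJ_SL3] fixset_orev_mJ A(2) B(2) by simp
  moreover have "lmap B \<in> isomX" using B(1) unfolding isomX_def by blast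
  ultimately have "type2_plane (fixset \<phi>)" unfolding type2_plane_def by blast
  moreover have "\<phi> \<in> InvolRev" using A InvolRev_eq SymSL3_eq_Un by blast
  ultimately show "\<phi> \<in> {\<phi> \<in> InvolRev. type2_plane (fixset \<phi>)}" by blast
qed

lemma connected_components_of_clopen_partition:
  assumes "topspace X = U \<union> V" "U \<inter> V = {}" "openin X U" "openin X V"
    and "connectedin X U" "connectedin X V" "U \<noteq> {}" "V \<noteq> {}"
  shows "connected_components_of X = {U, V}"
proof -
  have "topspace X - U = V" "topspace X - V = U" using assms(1,2) by blast+
  then have "closedin X U" "closedin X V"
    using assms(1,3,4) by (simp_all add: closedin_def)
  have component: "connected_component_of_set X x = W"
    if "connectedin X W" "closedin X W" "openin X W" "x \<in> W" for W x
  proof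
    show "W \<subseteq> connected_component_of_set X x"
      by (rule connected_component_of_maximal[OF that(1,4)])
    have "x \<in> connected_component_of_set X x"
      using that(3,4) openin_subset connected_component_of_refl by fastforce
    then show "connected_component_of_set X x \<subseteq> W"
      using connectedin_clopen_cases[OF connectedin_connected_component_of that(2,3)] that(4)
      unfolding disjnt_def by blast
  qed
  have "connected_components_of X = connected_component_of_set X ` (U \<union> V)"
    unfolding connected_components_of_def assms(1) ..
  also have "\<dots> = {U, V}"
    using component[OF assms(5) \<open>closedin X U\<close> assms(3)] component[OF assms(6) \<open>closedin X V\<close> assms(4)]
      assms(7,8) by blast
  finally show ?thesis .
qed

lemma openin_topX:
  "openin topX U \<longleftrightarrow> U \<subseteq> Xsp \<and> openin (top_of_set SL3) {M \<in> SL3. cls M \<in> U}"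
proof -
  let ?L = "\<lambda>U. U \<subseteq> Xsp \<and> openin (top_of_set SL3) {M \<in> SL3. cls M \<in> U}"
  have "?L (S \<inter> T)" if "?L S" "?L T" for S T
  proof -
    have "{M \<in> SL3. cls M \<in> S \<inter> T} = {M \<in> SL3. cls M \<in> S} \<inter> {M \<in> SL3. cls M \<in> T}" by blast
    then show ?thesis using that by (auto intro: openin_Int)
  qed
  moreover have "?L (\<Union>\<K>)" if "\<forall>S\<in>\<K>. ?L S" for \<K>
  proof -
    have "{M \<in> SL3. cls M \<in> \<Union>\<K>} = (\<Union>S\<in>\<K>. {M \<in> SL3. cls M \<in> S})" by blast
    then show ?thesis using that by (auto intro: openin_Union)
  qed
  ultimately have "istopology ?L" unfolding istopology_def by blast
  then show ?thesis unfolding topX_def by simp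
qed

lemma topspace_topX: "topspace topX = Xsp"
proof
  show "topspace topX \<subseteq> Xsp" using openin_topspace[of topX] unfolding openin_topX by blast
  have "{M \<in> SL3. cls M \<in> Xsp} = SL3" using cls_Xsp by blast
  then have "openin topX Xsp" unfolding openin_topX by simp
  then show "Xsp \<subseteq> topspace topX" by (rule openin_subset)
qed

lemma continuous_map_cls: "continuous_map (top_of_set SL3) topX cls"
  unfolding continuous_map_def topspace_topX openin_topX using cls_Xsp by auto

definition gram :: "mat3 set \<Rightarrow> mat3" where
  "gram x = rep x ** transpose (rep x)"

lemma gram_cls: "gram (cls M) = M ** transpose M"
  unfolding gram_def by (rule gram_rep_cls)

lemma continuous_map_gram: "continuous_map topX euclideanreal (\<lambda>x. gram x $ a $ b)"
  unfolding continuous_map_def topspace_topX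
proof (intro conjI allI impI)
  show "(\<lambda>x. gram x $ a $ b) \<in> Xsp \<rightarrow> topspace euclideanreal" by simp
  fix V :: "real set" assume "openin euclideanreal V"
  have "continuous_on SL3 (\<lambda>M. (M ** transpose M) $ a $ b)"
    unfolding mult_transpose_rows by (intro continuous_intros)
  then have "openin (top_of_set SL3) (SL3 \<inter> (\<lambda>M. (M ** transpose M) $ a $ b) -` V)"
    using \<open>openin euclideanreal V\<close> by (simp add: continuous_openin_preimage_gen)
  moreover have "{M \<in> SL3. cls M \<in> {x \<in> Xsp. gram x $ a $ b \<in> V}}
      = SL3 \<inter> (\<lambda>M. (M ** transpose M) $ a $ b) -` V"
    using cls_Xsp gram_cls by auto
  ultimately show "openin topX {x \<in> Xsp. gram x $ a $ b \<in> V}"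
    unfolding openin_topX by auto
qed

lemma continuous_map_eval_gram:
  assumes "p \<in> Xsp"
  shows "continuous_map mapsX_top euclideanreal (\<lambda>\<phi>. gram (\<phi> p) $ a $ b)"
  using continuous_map_compose[OF continuous_map_product_projection[OF assms] continuous_map_gram]
  unfolding mapsX_top_def comp_def .

lemma continuous_on_matrix_mult:
  "continuous_on S f \<Longrightarrow> continuous_on S g \<Longrightarrow> continuous_on S (\<lambda>x. (f x :: mat3) ** g x)"
  unfolding matrix_matrix_mult_def by (intro continuous_intros)

lemma continuous_map_orev:
  assumes "continuous_on S f" "f ` S \<subseteq> SL3"
  shows "continuous_map (top_of_set S) mapsX_top (\<lambda>s. orev (f s))"
  unfolding mapsX_top_def continuous_map_componentwise
proof (intro conjI ballI)
  show "(\<lambda>s. orev (f s)) ` topspace (top_of_set S) \<subseteq> extensional Xsp"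
    unfolding orev_def by auto
  fix y assume y: "y \<in> Xsp"
  have "continuous_on S (\<lambda>s. f s ** mstar (rep y))"
    by (intro continuous_on_matrix_mult assms(1) continuous_on_const)
  moreover have "(\<lambda>s. f s ** mstar (rep y)) ` S \<subseteq> SL3"
    using assms(2) SL3_mult SL3_mstar rep_SL3[OF y] by blast
  ultimately have "continuous_map (top_of_set S) (top_of_set SL3) (\<lambda>s. f s ** mstar (rep y))"
    by (auto simp: continuous_map_into_subtopology)
  from continuous_map_compose[OF this continuous_map_cls]
  have "continuous_map (top_of_set S) topX (\<lambda>s. cls (f s ** mstar (rep y)))"
    unfolding comp_def .
  then show "continuous_map (top_of_set S) topX (\<lambda>s. orev (f s) y)"
    unfolding orev_def using y by simp
qed

section \<open>Connectedness of the two classes\<close>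

definition PosDef :: "mat3 set" where
  "PosDef = {P. transpose P = P \<and> pos_def P}"

definition det_normalize :: "mat3 \<Rightarrow> mat3" where
  "det_normalize P = (1 / root 3 (det P)) *\<^sub>R P"

lemma convex_PosDef: "convex PosDef"
  unfolding convex_def
proof (intro ballI allI impI)
  fix P Q :: mat3 and u v :: real
  assume P: "P \<in> PosDef" and Q: "Q \<in> PosDef" and uv: "0 \<le> u" "0 \<le> v" "u + v = 1"
  have "transpose (u *\<^sub>R P + v *\<^sub>R Q) = u *\<^sub>R transpose P + v *\<^sub>R transpose Q"
    by (simp add: transpose_def vec_eq_iff)
  moreover have "0 < quad_form (u *\<^sub>R P + v *\<^sub>R Q) x" if "x \<noteq> 0" for x
  proof -
    have "0 < quad_form P x" "0 < quad_form Q x"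
      using P Q that by (auto simp: PosDef_def pos_def_def)
    moreover have "quad_form (u *\<^sub>R P + v *\<^sub>R Q) x = u * quad_form P x + v * quad_form Q x"
      by (simp add: quad_form_def matrix_vector_mult_add_rdistrib scaleR_matrix_vector_assoc[symmetric]
          inner_add_right)
    ultimately show ?thesis
      using uv by (smt (verit) mult_nonneg_nonneg mult_pos_pos)
  qed
  ultimately show "u *\<^sub>R P + v *\<^sub>R Q \<in> PosDef"
    using P Q by (simp add: PosDef_def pos_def_def)
qed

lemma det_scaleR_mat3: "det (c *\<^sub>R (P::mat3)) = c ^ 3 * det P"
  by (simp add: det_3 algebra_simps power3_eq_cube)

lemma
  assumes "transpose P = P" "det P > 0"
  shows transpose_det_normalize: "transpose (det_normalize P) = det_normalize P"
    and det_det_normalize: "det (det_normalize P) = 1"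
    and quad_form_det_normalize: "quad_form (det_normalize P) x = quad_form P x / root 3 (det P)"
proof -
  show "transpose (det_normalize P) = det_normalize P"
    using assms(1) by (simp add: det_normalize_def transpose_def vec_eq_iff)
  show "det (det_normalize P) = 1"
    using assms(2) by (simp add: det_normalize_def det_scaleR_mat3 power_divide)
  show "quad_form (det_normalize P) x = quad_form P x / root 3 (det P)"
    by (simp add: det_normalize_def quad_form_def scaleR_matrix_vector_assoc[symmetric])
qed

lemma det_normalize_PosSL3:
  assumes "P \<in> PosDef"
  shows "det_normalize P \<in> PosSL3"
proof -
  have P: "transpose P = P" "pos_def P" "det P > 0"
    using assms pos_def_det_pos by (auto simp: PosDef_def)
  then have "pos_def (det_normalize P)"
    by (simp add: pos_def_def quad_form_det_normalize)
  then show ?thesis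
    using transpose_det_normalize[OF P(1,3)] det_det_normalize[OF P(1,3)] by (simp add: PosSL3_def SymSL3_def SL3_def)
qed

lemma continuous_on_det_normalize:
  assumes "continuous_on S f" "\<And>z. z \<in> S \<Longrightarrow> det (f z) > 0"
  shows "continuous_on S (\<lambda>z. det_normalize (f z))"
proof -
  have "continuous_on S (\<lambda>z. det (f z))"
    unfolding det_3 by (intro continuous_intros assms(1))
  then show ?thesis
    unfolding det_normalize_def using assms(2)
    by (intro continuous_intros assms(1)) (auto simp: less_imp_neq[symmetric])
qed

lemma connectedin_orev_image:
  assumes "connected S" "continuous_on S f" "f ` S \<subseteq> SL3"
  shows "connectedin mapsX_top (orev ` f ` S)"
  using connectedin_continuous_map_image[OF continuous_map_orev[OF assms(2,3)]] assms(1)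
  by (simp add: image_image)

lemma PosSL3_eq_image: "PosSL3 = det_normalize ` PosDef"
proof
  show "PosSL3 \<subseteq> det_normalize ` PosDef"
  proof
    fix A assume "A \<in> PosSL3"
    then have "A \<in> PosDef" "det_normalize A = A"
      by (auto simp: PosSL3_def SymSL3_def SL3_def PosDef_def det_normalize_def)
    then show "A \<in> det_normalize ` PosDef" by (metis image_eqI)
  qed
  show "det_normalize ` PosDef \<subseteq> PosSL3" using det_normalize_PosSL3 by blast
qed

lemma connectedin_orev_PosSL3: "connectedin mapsX_top (orev ` PosSL3)"
proof -
  have "continuous_on PosDef det_normalize"
    using continuous_on_det_normalize[of PosDef "\<lambda>P. P"] pos_def_det_pos
    by (auto simp: PosDef_def continuous_on_id)
  then show ?thesis
    unfolding PosSL3_eq_image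
    using connectedin_orev_image convex_connected[OF convex_PosDef] det_normalize_PosSL3
    by (auto simp: PosSL3_def SymSL3_def)
qed

lemma det_normalize_half_turn_IndefSL3:
  assumes M: "M \<in> PosDef" and u: "norm u = 1"
  shows "det_normalize (M ** half_turn u ** M) \<in> IndefSL3"
proof -
  define A where "A = M ** half_turn u ** M"
  have M': "transpose M = M" "det M > 0" using M pos_def_det_pos by (auto simp: PosDef_def)
  have "det A > 0" unfolding A_def using M' u by (simp add: det_mul det_half_turn norm_eq_1)
  moreover have "transpose A = A"
    unfolding A_def using M' by (simp add: matrix_transpose_mul transpose_half_turn matrix_mul_assoc)
  moreover have "\<not> pos_def (det_normalize A)"
  proof
    obtain v where v: "norm v = 1" "v \<bullet> u = 0" using unit_orthogonal_exists[OF u] .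
    define x where "x = matrix_inv M *v v"
    have "M *v x = v"
      using M' by (simp add: x_def matrix_vector_mul_assoc matrix_inv_right del: transpose_matrix_vector)
    then have "x \<noteq> 0" using v(1) by auto
    moreover assume "pos_def (det_normalize A)"
    ultimately have "0 < quad_form A x / root 3 (det A)"
      using quad_form_det_normalize[OF \<open>transpose A = A\<close> \<open>det A > 0\<close>] by (simp add: pos_def_def)
    moreover have "quad_form A x = quad_form (half_turn u) v"
      unfolding A_def using quad_form_congruence[of M "half_turn u" x] M'(1) \<open>M *v x = v\<close> by simp
    ultimately show False
      using v \<open>det A > 0\<close> by (simp add: quad_form_half_turn inner_commute norm_eq_1 zero_less_divide_iff)
  qed
  ultimately show ?thesis
    using transpose_det_normalize det_det_normalize by (simp add: A_def[symmetric] IndefSL3_def SymSL3_def SL3_def)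
qed

lemma IndefSL3_eq_image:
  "IndefSL3 = (\<lambda>(M, u). det_normalize (M ** half_turn u ** M)) ` (PosDef \<times> sphere 0 1)"
proof
  show "IndefSL3 \<subseteq> (\<lambda>(M, u). det_normalize (M ** half_turn u ** M)) ` (PosDef \<times> sphere 0 1)"
  proof
    fix A assume "A \<in> IndefSL3"
    then have A: "transpose A = A" "det A = 1" "\<not> pos_def A"
      by (auto simp: IndefSL3_def SymSL3_def SL3_def)
    then obtain M u where "transpose M = M" "pos_def M" "norm u = 1" "A = M ** half_turn u ** M"
      using indefinite_half_turn_form[of A] by auto
    moreover have "det_normalize A = A" using A(2) by (simp add: det_normalize_def)
    ultimately show "A \<in> (\<lambda>(M, u). det_normalize (M ** half_turn u ** M)) ` (PosDef \<times> sphere 0 1)"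
      unfolding PosDef_def by (auto intro!: image_eqI[of _ _ "(M, u)"])
  qed
  show "(\<lambda>(M, u). det_normalize (M ** half_turn u ** M)) ` (PosDef \<times> sphere 0 1) \<subseteq> IndefSL3"
    using det_normalize_half_turn_IndefSL3 by auto
qed

lemma connectedin_orev_IndefSL3: "connectedin mapsX_top (orev ` IndefSL3)"
proof -
  let ?F = "\<lambda>z. det_normalize (fst z ** half_turn (snd z) ** fst z)"
  have "det (fst z ** half_turn (snd z) ** fst z) > 0" if "z \<in> PosDef \<times> sphere 0 1" for z
    using that pos_def_det_pos by (auto simp: PosDef_def det_mul det_half_turn norm_eq_1)
  then have "continuous_on (PosDef \<times> sphere 0 1) ?F"
    by (intro continuous_on_det_normalize continuous_on_matrix_mult continuous_on_half_turn
        continuous_intros)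
  moreover have "connected (PosDef \<times> sphere (0::real^3) 1)"
    by (intro connected_Times convex_connected convex_PosDef connected_sphere) simp
  moreover have "?F ` (PosDef \<times> sphere 0 1) = IndefSL3"
    unfolding IndefSL3_eq_image by (auto simp: case_prod_beta)
  ultimately show ?thesis
    using connectedin_orev_image[of "PosDef \<times> sphere 0 1" ?F] by (auto simp: IndefSL3_def SymSL3_def)
qed

section \<open>Separating the two classes\<close>

definition sigma2 :: "mat3 \<Rightarrow> real" where
  "sigma2 A = A$1$1 * A$2$2 - A$1$2 * A$2$1 + A$1$1 * A$3$3 - A$1$3 * A$3$1
      + A$2$2 * A$3$3 - A$2$3 * A$3$2"

definition adjugate3 :: "mat3 \<Rightarrow> mat3" where
  "adjugate3 M = vector [
     vector [M$2$2*M$3$3 - M$2$3*M$3$2, M$1$3*M$3$2 - M$1$2*M$3$3, M$1$2*M$2$3 - M$1$3*M$2$2],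
     vector [M$2$3*M$3$1 - M$2$1*M$3$3, M$1$1*M$3$3 - M$1$3*M$3$1, M$1$3*M$2$1 - M$1$1*M$2$3],
     vector [M$2$1*M$3$2 - M$2$2*M$3$1, M$1$2*M$3$1 - M$1$1*M$3$2, M$1$1*M$2$2 - M$1$2*M$2$1]]"

lemma matrix_inv_eq_adjugate3: "det M = 1 \<Longrightarrow> matrix_inv M = adjugate3 M"
  by (rule matrix_inv_unique) (simp add: adjugate3_def mat3_expand algebra_simps)

lemma sigma2_adjugate3: "sigma2 (adjugate3 A) = trace A * det A"
  by (simp add: sigma2_def adjugate3_def trace_def mat3_expand algebra_simps)

lemma sigma2_eq_trace: "sigma2 A = ((trace A)\<^sup>2 - trace (A ** A)) / 2"
  by (simp add: sigma2_def trace_def mat3_expand power2_eq_square algebra_simps)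

lemma trace_congruence_diag3:
  assumes "orthogonal_matrix R"
  shows "trace (R ** diag3 lam ** transpose R) = lam$1 + lam$2 + lam$3"
proof -
  have "trace (R ** diag3 lam ** transpose R) = trace ((transpose R ** R) ** diag3 lam)"
    by (metis matrix_mul_assoc trace_mul_sym)
  then show ?thesis using assms by (simp add: orthogonal_matrix trace_def mat3_expand)
qed

lemma sigma2_congruence_diag3:
  assumes "orthogonal_matrix R"
  shows "sigma2 (R ** diag3 lam ** transpose R) = lam$1 * lam$2 + lam$1 * lam$3 + lam$2 * lam$3"
proof -
  have RR: "transpose R ** R = mat 1" using assms by (simp add: orthogonal_matrix)
  have "(R ** diag3 lam ** transpose R) ** (R ** diag3 lam ** transpose R)
      = R ** diag3 (\<chi> i. lam$i * lam$i) ** transpose R"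
    by (simp add: matrix_mul_assoc[symmetric] diag3_mult[symmetric])
       (simp add: matrix_mul_assoc RR)
  then show ?thesis
    unfolding sigma2_eq_trace using trace_congruence_diag3[OF assms]
    by (simp add: power2_eq_square algebra_simps)
qed

lemma PosSL3_signs:
  assumes "A \<in> PosSL3"
  shows "trace A > 0" "sigma2 A > 0"
proof -
  have A: "transpose A = A" "pos_def A" using assms by (auto simp: PosSL3_def SymSL3_def)
  obtain R lam where R: "rotation_matrix R" "A = R ** diag3 lam ** transpose R"
    using symmetric_mat3_spectral[OF A(1)] by blast
  then have "orthogonal_matrix R" by (simp add: rotation_matrix_def)
  moreover have "\<forall>i. lam$i > 0" using A(2) R pos_def_congruence_diag3 \<open>orthogonal_matrix R\<close> by simp
  ultimately show "trace A > 0" "sigma2 A > 0"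
    using R(2) by (simp_all add: trace_congruence_diag3 sigma2_congruence_diag3 add_pos_pos)
qed

lemma IndefSL3_signs:
  assumes "A \<in> IndefSL3"
  shows "trace A < 0 \<or> sigma2 A < 0"
proof -
  have A: "transpose A = A" "\<not> pos_def A" "det A = 1"
    using assms by (auto simp: IndefSL3_def SymSL3_def SL3_def)
  obtain R lam where R: "rotation_matrix R" "A = R ** diag3 lam ** transpose R"
    and "lam$1 < 0" "lam$2 < 0" "lam$3 > 0"
    using indefinite_mat3_spectral[OF A(1) _ A(2)] A(3) by auto
  moreover have "a + b + c < 0 \<or> a * b + a * c + b * c < 0" if "a < 0" "b < 0" for a b c :: real
    using that by (smt (verit) distrib_left mult.commute mult_pos_neg)
  ultimately show ?thesis
    by (simp add: trace_congruence_diag3 sigma2_congruence_diag3 rotation_matrix_def)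
qed

text \<open>
  For \<open>g U = A U U\<^sup>T A\<close> with \<open>A\<close> symmetric, the values of \<open>g\<close> at \<open>1\<close> and at the transvections
  \<open>1 \<plusminus> E\<^sub>i\<^sub>j\<close> combine to the principal minor \<open>A\<^sub>i\<^sub>i A\<^sub>j\<^sub>j - A\<^sub>i\<^sub>j\<^sup>2\<close>.
\<close>

definition polar_minor2 :: "(mat3 \<Rightarrow> mat3) \<Rightarrow> 3 \<Rightarrow> 3 \<Rightarrow> real" where
  "polar_minor2 g i j =
     (g (transvection i j 1) $ i $ j - g (transvection i j (-1)) $ i $ j) / 2
     - (g (transvection i j 1) $ j $ j + g (transvection i j (-1)) $ j $ j) + 2 * g (mat 1) $ j $ j"

definition polar_sigma2 :: "(mat3 \<Rightarrow> mat3) \<Rightarrow> real" where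
  "polar_sigma2 g = polar_minor2 g 1 2 + polar_minor2 g 1 3 + polar_minor2 g 2 3"

lemma polar_sigma2_congruence:
  assumes "transpose A = A"
  shows "polar_sigma2 (\<lambda>U. A ** U ** transpose U ** A) = sigma2 A"
  using symmetric_mat3_entries[OF assms]
  by (simp add: polar_sigma2_def polar_minor2_def sigma2_def transvection_def mat3_expand
      algebra_simps; simp add: field_simps)

lemma polar_sigma2_cong: "(\<And>U. U \<in> SL3 \<Longrightarrow> g U = h U) \<Longrightarrow> polar_sigma2 g = polar_sigma2 h"
  using transvection_SL3 mat_1_SL3 by (simp add: polar_sigma2_def polar_minor2_def)

lemma continuous_map_polar_sigma2:
  assumes "\<And>U a b. U \<in> SL3 \<Longrightarrow> continuous_map X euclideanreal (\<lambda>\<phi>. G \<phi> U $ a $ b)"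
  shows "continuous_map X euclideanreal (\<lambda>\<phi>. polar_sigma2 (G \<phi>))"
  unfolding polar_sigma2_def polar_minor2_def
  by (intro continuous_intros assms transvection_SL3 mat_1_SL3) simp_all

definition probe_sigma2 :: "(mat3 set \<Rightarrow> mat3 set) \<Rightarrow> real" where
  "probe_sigma2 \<phi> = polar_sigma2 (\<lambda>U. gram (\<phi> (cls (mstar U))))"

text \<open>
  For \<open>\<phi> = orev A\<close> the Gram matrix of \<open>\<phi> [U]\<close> is \<open>A (U U\<^sup>T)\<^sup>-\<^sup>1 A\<close>; its adjugate is
  \<open>A\<^sup>-\<^sup>1 U U\<^sup>T A\<^sup>-\<^sup>1\<close>, and \<open>\<sigma>\<^sub>2 (A\<^sup>-\<^sup>1) = tr A\<close>.
\<close>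

definition probe_trace :: "(mat3 set \<Rightarrow> mat3 set) \<Rightarrow> real" where
  "probe_trace \<phi> = polar_sigma2 (\<lambda>U. adjugate3 (gram (\<phi> (cls U))))"

lemma probe_sigma2_orev:
  assumes "A \<in> SymSL3"
  shows "probe_sigma2 (orev A) = sigma2 A"
proof -
  have A: "transpose A = A" using assms by (simp add: SymSL3_def)
  have "gram (orev A (cls (mstar U))) = A ** U ** transpose U ** A" if "U \<in> SL3" for U
  proof -
    have "orev A (cls (mstar U)) = cls (A ** U)"
      using orev_cls[OF SL3_mstar[OF that]] mstar_mstar that by (simp add: SL3_def)
    then show ?thesis using A by (simp add: gram_cls matrix_transpose_mul matrix_mul_assoc)
  qed
  then have "probe_sigma2 (orev A) = polar_sigma2 (\<lambda>U. A ** U ** transpose U ** A)"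
    unfolding probe_sigma2_def by (rule polar_sigma2_cong)
  then show ?thesis using polar_sigma2_congruence[OF A] by simp
qed

lemma probe_trace_orev:
  assumes "A \<in> SymSL3"
  shows "probe_trace (orev A) = trace A"
proof -
  have A: "transpose A = A" "det A = 1" using assms by (auto simp: SymSL3_def SL3_def)
  define B where "B = matrix_inv A"
  have B: "transpose B = B" "det B = 1"
    using A matrix_inv_transpose[of A] by (simp_all add: B_def det_matrix_inv)
  have "adjugate3 (gram (orev A (cls U))) = B ** U ** transpose U ** B" if "U \<in> SL3" for U
  proof -
    have dU: "det (U ** transpose U) = 1" using that by (simp add: SL3_def det_mul)
    have "gram (orev A (cls U)) = A ** matrix_inv (U ** transpose U) ** A"
      using that A(1) by (simp add: orev_cls gram_cls mstar_gram[symmetric] SL3_def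
          matrix_transpose_mul matrix_mul_assoc)
    moreover have "det (A ** matrix_inv (U ** transpose U) ** A) = 1"
      using A(2) dU by (simp add: det_mul det_matrix_inv)
    ultimately have "adjugate3 (gram (orev A (cls U))) = matrix_inv (A ** matrix_inv (U ** transpose U) ** A)"
      by (simp add: matrix_inv_eq_adjugate3)
    also have "\<dots> = B ** U ** transpose U ** B"
      using A(2) dU by (simp add: B_def matrix_inv_mult det_mul det_matrix_inv matrix_inv_matrix_inv
          matrix_mul_assoc)
    finally show ?thesis .
  qed
  then have "probe_trace (orev A) = polar_sigma2 (\<lambda>U. B ** U ** transpose U ** B)"
    unfolding probe_trace_def by (rule polar_sigma2_cong)
  also have "\<dots> = sigma2 B" by (rule polar_sigma2_congruence[OF B(1)])
  also have "\<dots> = trace A"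
    using A(2) sigma2_adjugate3[of A] by (simp add: B_def matrix_inv_eq_adjugate3)
  finally show ?thesis .
qed

lemma continuous_map_probe_sigma2: "continuous_map mapsX_top euclideanreal probe_sigma2"
  unfolding probe_sigma2_def[abs_def]
  by (intro continuous_map_polar_sigma2 continuous_map_eval_gram cls_Xsp SL3_mstar)

lemma continuous_map_probe_trace: "continuous_map mapsX_top euclideanreal probe_trace"
  unfolding probe_trace_def[abs_def]
proof (intro continuous_map_polar_sigma2)
  fix U a b assume "U \<in> SL3"
  then have "continuous_map mapsX_top euclideanreal (\<lambda>\<phi>. gram (\<phi> (cls U)) $ a $ b)" for a b
    by (intro continuous_map_eval_gram cls_Xsp)
  then have "\<forall>a b. continuous_map mapsX_top euclideanreal (\<lambda>\<phi>. adjugate3 (gram (\<phi> (cls U))) $ a $ b)"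
    unfolding forall_3 adjugate3_def by (simp add: vector_3) (intro conjI continuous_intros)
  then show "continuous_map mapsX_top euclideanreal (\<lambda>\<phi>. adjugate3 (gram (\<phi> (cls U))) $ a $ b)"
    by blast
qed

definition probe_sign :: "(mat3 set \<Rightarrow> mat3 set) \<Rightarrow> real" where
  "probe_sign \<phi> = min (probe_trace \<phi>) (probe_sigma2 \<phi>)"

lemma continuous_map_probe_sign: "continuous_map mapsX_top euclideanreal probe_sign"
  unfolding probe_sign_def[abs_def]
  by (intro continuous_intros continuous_map_probe_trace continuous_map_probe_sigma2)

lemma orev_PosSL3_eq: "orev ` PosSL3 = {\<phi> \<in> InvolRev. probe_sign \<phi> > 0}"
  and orev_IndefSL3_eq: "orev ` IndefSL3 = {\<phi> \<in> InvolRev. probe_sign \<phi> < 0}"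
proof -
  have pos: "probe_sign (orev A) > 0" if "A \<in> PosSL3" for A
  proof -
    have "A \<in> SymSL3" using that SymSL3_eq_Un by blast
    then show ?thesis
      using PosSL3_signs[OF that] by (simp add: probe_sign_def probe_trace_orev probe_sigma2_orev)
  qed
  have neg: "probe_sign (orev A) < 0" if "A \<in> IndefSL3" for A
  proof -
    have "A \<in> SymSL3" using that SymSL3_eq_Un by blast
    then show ?thesis
      using IndefSL3_signs[OF that] by (auto simp: probe_sign_def probe_trace_orev probe_sigma2_orev)
  qed
  show "orev ` PosSL3 = {\<phi> \<in> InvolRev. probe_sign \<phi> > 0}"
    unfolding InvolRev_eq SymSL3_eq_Un using pos neg by fastforce
  show "orev ` IndefSL3 = {\<phi> \<in> InvolRev. probe_sign \<phi> < 0}"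
    unfolding InvolRev_eq SymSL3_eq_Un using pos neg by fastforce
qed

lemma InvolRev_subset_topspace: "InvolRev \<subseteq> topspace mapsX_top"
  unfolding InvolRev_eq mapsX_top_def topspace_product_topology topspace_topX
  by (auto simp: PiE_def orev_def SymSL3_def intro!: cls_Xsp SL3_mult SL3_mstar rep_SL3)

lemma openin_orev_PosSL3: "openin (subtopology mapsX_top InvolRev) (orev ` PosSL3)"
  and openin_orev_IndefSL3: "openin (subtopology mapsX_top InvolRev) (orev ` IndefSL3)"
proof -
  let ?X = "subtopology mapsX_top InvolRev"
  have top: "topspace ?X = InvolRev" using InvolRev_subset_topspace by auto
  have sign: "continuous_map ?X euclideanreal probe_sign"
    by (rule continuous_map_from_subtopology[OF continuous_map_probe_sign])
  have preimages: "orev ` PosSL3 = {\<phi> \<in> topspace ?X. probe_sign \<phi> \<in> {0<..}}"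
    "orev ` IndefSL3 = {\<phi> \<in> topspace ?X. probe_sign \<phi> \<in> {..<0}}"
    unfolding orev_PosSL3_eq orev_IndefSL3_eq top by auto
  show "openin ?X (orev ` PosSL3)" "openin ?X (orev ` IndefSL3)"
    unfolding preimages by (intro openin_continuous_map_preimage[OF sign]; simp)+
qed

theorem lemma2p2:
  shows "connected_components_of (subtopology mapsX_top InvolRev) =
           {inversion ` Xsp, {\<phi> \<in> InvolRev. type2_plane (fixset \<phi>)}}
         \<and> inversion ` Xsp \<noteq> {\<phi> \<in> InvolRev. type2_plane (fixset \<phi>)}"
proof -
  let ?X = "subtopology mapsX_top InvolRev"
  have "topspace ?X = orev ` PosSL3 \<union> orev ` IndefSL3"
    using InvolRev_subset_topspace unfolding InvolRev_eq SymSL3_eq_Un by auto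
  moreover have disjoint: "orev ` PosSL3 \<inter> orev ` IndefSL3 = {}"
    unfolding orev_PosSL3_eq orev_IndefSL3_eq by auto
  moreover note openin_orev_PosSL3 openin_orev_IndefSL3
  moreover have "connectedin ?X (orev ` PosSL3)" "connectedin ?X (orev ` IndefSL3)"
    using connectedin_orev_PosSL3 connectedin_orev_IndefSL3 InvolRev_eq SymSL3_eq_Un
    by (auto simp: connectedin_subtopology)
  moreover have nonempty: "orev ` PosSL3 \<noteq> {}" "orev ` IndefSL3 \<noteq> {}"
    using gram_PosSL3[OF mat_1_SL3] mJ_IndefSL3 by auto
  ultimately have "connected_components_of ?X = {orev ` PosSL3, orev ` IndefSL3}"
    by (rule connected_components_of_clopen_partition)
  moreover have "orev ` PosSL3 \<noteq> orev ` IndefSL3" using disjoint nonempty by blast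
  ultimately show ?thesis unfolding inversions_eq type2_involutions_eq by blast
qed

end
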